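(* Let $\nu_n(x_0,x_1)$ ($n\ge 0$) be any nonvanishing functions and $\bar P_n(x;x_0,x_1)=\nu_n(x_0,x_1)P_n(x;x_0,x_1)$. Then for all $n\ge1$: $$\mathcal{A}_6\bar P_n=\frac{1}{(1-x_0^2)(1-x_1^2)}\Bigg\{\frac{\nu_n(q^{-\frac12}x_0,q^{-\frac12}x_1)}{\nu_{n+1}(x_0,x_1)}q^{-n-\frac52}\left(x_0^2x_1^2-q^{n+2}\right)^2\bar P_{n+1}$$ $$-q^{-n-\frac32}\left(\frac{\nu_n(q^{\frac12}x_0,q^{-\frac12}x_1)}{\nu_n(x_0,x_1)}(x_1^2-q^{n+1})^2+\frac{\nu_n(q^{-\frac12}x_0,q^{\frac12}x_1)}{\nu_n(x_0,x_1)}(x_0^2-q^{n+1})^2\right)\bar P_n+\frac{\nu_n(q^{\frac12}x_0,q^{\frac12}x_1)}{\nu_{n-1}(x_0,x_1)}q^{-n-\frac12}(1-q^n)^2\bar P_{n-1}\Bigg\},$$ where on the right-hand side $\bar P_m=\bar P_m(x;x_0,x_1)$.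
   Context: Let $q$ be a complex parameter with $0<|q|<1$, with a fixed choice of $q^{1/4}$ and $q^{k/4}:=(q^{1/4})^k$; $x,x_0,x_1$ are variables. Notation: $(y)_n=(y;q)_n=\prod_{i=1}^{n}(1-yq^{i-1})$, $(y_1,\dots,y_k)_n=(y_1)_n\cdots(y_k)_n$. Operators on functions $f(x,x_0,x_1)$: $\eth f(x,x_0,x_1)=f(q^{1/2}x,x_0,x_1)$, $\eth_0 f(x,x_0,x_1)=f(x,q^{1/2}x_0,x_1)$, $\eth_1 f(x,x_0,x_1)=f(x,x_0,q^{1/2}x_1)$, with powers and inverses defined accordingly; a function written to the left of an operator acts by multiplication after the operator is applied, and products of operators denote composition. For $n\ge0$, $$P_n(x;x_0,x_1)=(-1)^nq^{-\frac n2}\frac{\left(q,\frac{q}{x_0^2},\frac{q}{x_1^2}\right)_n}{\left(\frac{q^{n+1}}{x_0^2x_1^2}\right)_n}\sum_{k=0}^{n}q^k\frac{\left(q^{-n},\frac{q^{n+1}}{x_0^2x_1^2}\right)_k}{\left(q,q,\frac{q}{x_0^2},\frac{q}{x_1^2}\right)_k}\left(-q^{\frac12}x,-q^{\frac12}x^{-1}\right)_k$$ (the Askey–Wilson polynomial with parameters $(a,b,c,d)=(-q^{1/2},-q^{1/2},-q^{1/2}/x_0^2,-q^{1/2}/x_1^2)$). Let $\omega(x)=\frac{x(1+q^{1/2}x)}{q^{1/2}(1-x^2)(1-q^{1/2}x)}$ and, for $b\in\{0,1\}$, $$K_0(x_b;x)=-\frac{1}{1-x_b^2}\eth_b+\frac{(q^{\frac12}x+x_b^2)(q^{\frac32}x+x_b^2)}{q\,x(1-x_b^2)}\eth_b^{-1},\qquad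 G_0(x_b;x)=-\frac{1}{1-x_b^2}\eth_b+\frac{(q^{\frac12}x+x_b^2)(q^{\frac12}+x\,x_b^2)}{q^{\frac12}x(1-x_b^2)}\eth_b^{-1}.$$ Define (image of the curve $\mathbb{k}_6$ of the genus-two skein algebra) $$\mathcal{A}_6=\sum_{\epsilon=\pm1}\omega(x^\epsilon)\left\{K_0(x_0;x^\epsilon)\,K_0(x_1;x^\epsilon)\,\eth^{2\epsilon}-G_0(x_0;x)\,G_0(x_1;x)\right\}.$$ *)

theory Defs
  imports Complex_Main
begin

text \<open>Conventions: q is a complex parameter, r is the fixed choice of q^(1/4) (so r^4 = q),
  hence q^(1/2) = r^2 and q^(k/4) = r^k. Functions f(x,x0,x1) are curried complex functions.\<close>

type_synonym cfun3 = "complex \<Rightarrow> complex \<Rightarrow> complex \<Rightarrow> complex"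

definition qpoch :: "complex \<Rightarrow> complex \<Rightarrow> nat \<Rightarrow> complex" where
  "qpoch q y n = (\<Prod>i<n. 1 - y * q ^ i)"

definition Pn :: "complex \<Rightarrow> complex \<Rightarrow> nat \<Rightarrow> cfun3" where
  "Pn q r n x x0 x1 =
     (-1) ^ n / (r^2) ^ n
     * (qpoch q q n * qpoch q (q / x0^2) n * qpoch q (q / x1^2) n)
       / qpoch q (q^(n+1) / (x0^2 * x1^2)) n
     * (\<Sum>k\<le>n. q ^ k
          * (qpoch q (1 / q^n) k * qpoch q (q^(n+1) / (x0^2 * x1^2)) k)
          / (qpoch q q k * qpoch q q k * qpoch q (q / x0^2) k * qpoch q (q / x1^2) k)
          * (qpoch q (- (r^2) * x) k * qpoch q (- (r^2) / x) k))"

definition Pbar :: "(nat \<Rightarrow> complex \<Rightarrow> complex \<Rightarrow> complex) \<Rightarrow> complex \<Rightarrow> complex \<Rightarrow> nat \<Rightarrow> cfun3" where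
  "Pbar nu q r n x x0 x1 = nu n x0 x1 * Pn q r n x x0 x1"

definition eth :: "complex \<Rightarrow> int \<Rightarrow> cfun3 \<Rightarrow> cfun3" where
  "eth r k f = (\<lambda>x x0 x1. f ((r^2) powi k * x) x0 x1)"

definition ethb :: "complex \<Rightarrow> nat \<Rightarrow> int \<Rightarrow> cfun3 \<Rightarrow> cfun3" where
  "ethb r b k f = (if b = 0 then (\<lambda>x x0 x1. f x ((r^2) powi k * x0) x1)
                             else (\<lambda>x x0 x1. f x x0 ((r^2) powi k * x1)))"

definition omega :: "complex \<Rightarrow> complex \<Rightarrow> complex" where
  "omega r y = y * (1 + r^2 * y) / (r^2 * (1 - y^2) * (1 - r^2 * y))"

text \<open>K_0(x_b; x^e) as an operator (coefficients evaluated at the current point).\<close>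
definition K0 :: "complex \<Rightarrow> nat \<Rightarrow> int \<Rightarrow> cfun3 \<Rightarrow> cfun3" where
  "K0 r b e f = (\<lambda>x x0 x1.
     (let xb = (if b = 0 then x0 else x1); y = x powi e in
       - (1 / (1 - xb^2)) * ethb r b 1 f x x0 x1
       + ((r^2 * y + xb^2) * (r^6 * y + xb^2)) / (r^4 * y * (1 - xb^2)) * ethb r b (-1) f x x0 x1))"

definition G0 :: "complex \<Rightarrow> nat \<Rightarrow> cfun3 \<Rightarrow> cfun3" where
  "G0 r b f = (\<lambda>x x0 x1.
     (let xb = (if b = 0 then x0 else x1) in
       - (1 / (1 - xb^2)) * ethb r b 1 f x x0 x1
       + ((r^2 * x + xb^2) * (r^2 + x * xb^2)) / (r^2 * x * (1 - xb^2)) * ethb r b (-1) f x x0 x1))"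

definition A6 :: "complex \<Rightarrow> cfun3 \<Rightarrow> cfun3" where
  "A6 r f = (\<lambda>x x0 x1. \<Sum>e\<in>{1, -1::int}.
      omega r (x powi e) * (K0 r 0 e (K0 r 1 e (eth r (2 * e) f)) x x0 x1
                            - G0 r 0 (G0 r 1 f) x x0 x1))"

text \<open>Genericity of the point (x,x0,x1): all denominators occurring in the identity
  (in omega, K_0, G_0 and in P_m, 0 \<le> m \<le> n+1, at all shifted points) are nonzero.\<close>
definition generic_point :: "complex \<Rightarrow> complex \<Rightarrow> nat \<Rightarrow> complex \<Rightarrow> complex \<Rightarrow> complex \<Rightarrow> bool" where
  "generic_point q r n x x0 x1 \<longleftrightarrow>
     x \<noteq> 0 \<and> x0 \<noteq> 0 \<and> x1 \<noteq> 0 \<and> x^2 \<noteq> 1 \<and> 1 - r^2 * x \<noteq> 0 \<and> 1 - r^2 / x \<noteq> 0 \<and>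
     x0^2 \<noteq> 1 \<and> x1^2 \<noteq> 1 \<and>
     (\<forall>a\<in>{1 / r^2, 1, r^2}. \<forall>b\<in>{1 / r^2, 1, r^2}. \<forall>m\<le>n+1.
        qpoch q (q^(m+1) / ((a * x0)^2 * (b * x1)^2)) m \<noteq> 0 \<and>
        qpoch q (q / (a * x0)^2) m \<noteq> 0 \<and> qpoch q (q / (b * x1)^2) m \<noteq> 0)"

end

theory Submission
  imports Defs
begin

(* Write s = q^(1/2), A = x0^2, B = x1^2 and expand P_n in the Askey-Wilson basis
   phi_k(x) = (-s x, -s/x; q)_k.  The operator A_6 is the sum of four parts, one for each choice of
   the exponents (+1 or -1) of eth_0 and eth_1, and each part sends phi_k to a combination of
   phi_(k+1), phi_k and phi_(k-1) with coefficients rational in q^k; this is a polynomial identity in x.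
   Comparing coefficients in the basis gives four contiguous relations: the parts with exponents
   (+,+), (+,-), (-,+), (-,-), applied to P_n with parameters (qA, qB), (qA, B/q), (A/q, qB), (A/q, B/q),
   are explicit multiples of P_(n-1), P_n, P_n and P_(n+1) with parameters (A, B).  Adding the four
   relations, weighted by the normalisations nu, gives the identity. *)

section \<open>The Askey-Wilson expansion\<close>

lemma qpoch_0 [simp]: "qpoch q y 0 = 1"
  by (simp add: qpoch_def)

lemma qpoch_Suc: "qpoch q y (Suc k) = qpoch q y k * (1 - y * q ^ k)"
  by (simp add: qpoch_def)

lemma qpoch_Suc_shift: "y' = q * y \<Longrightarrow> qpoch q y (Suc k) = (1 - y) * qpoch q y' k"
  unfolding qpoch_def prod.lessThan_Suc_shift by (simp add: mult_ac)

lemma qpoch_eq_0_iff: "qpoch q y m = 0 \<longleftrightarrow> (\<exists>k<m. y * q ^ k = 1)"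
  by (auto simp: qpoch_def)

lemma qpoch_inverse_power_eq_0: "q \<noteq> 0 \<Longrightarrow> n < k \<Longrightarrow> qpoch q (1 / q ^ n) k = 0"
  by (auto simp: qpoch_eq_0_iff)

definition aw_basis :: "complex \<Rightarrow> complex \<Rightarrow> nat \<Rightarrow> complex \<Rightarrow> complex" where
  "aw_basis q s k x = qpoch q (- s * x) k * qpoch q (- s / x) k"

definition aw_coeff :: "complex \<Rightarrow> complex \<Rightarrow> complex \<Rightarrow> complex \<Rightarrow> nat \<Rightarrow> complex" where
  "aw_coeff q N A B k = q ^ k * (qpoch q (1 / N) k * qpoch q (q * N / (A * B)) k)
     / (qpoch q q k * qpoch q q k * qpoch q (q / A) k * qpoch q (q / B) k)"

definition aw_norm :: "complex \<Rightarrow> complex \<Rightarrow> nat \<Rightarrow> complex \<Rightarrow> complex \<Rightarrow> complex" where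
  "aw_norm q s n A B = (-1) ^ n / s ^ n * (qpoch q q n * qpoch q (q / A) n * qpoch q (q / B) n)
     / qpoch q (q ^ (n + 1) / (A * B)) n"

definition aw_poly :: "complex \<Rightarrow> complex \<Rightarrow> nat \<Rightarrow> complex \<Rightarrow> complex \<Rightarrow> complex \<Rightarrow> complex" where
  "aw_poly q s n x A B = aw_norm q s n A B * (\<Sum>k\<le>n. aw_coeff q (q ^ n) A B k * aw_basis q s k x)"

lemma Pn_eq_aw_poly: "Pn q r n x x0 x1 = aw_poly q (r^2) n x (x0^2) (x1^2)"
  unfolding Pn_def aw_poly_def aw_norm_def aw_coeff_def aw_basis_def
  by (simp add: sum_distrib_left mult_ac)

lemma aw_poly_swap: "aw_poly q s n x A B = aw_poly q s n x B A"
  unfolding aw_poly_def aw_norm_def aw_coeff_def by (simp add: mult_ac)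

lemma aw_basis_Suc: "aw_basis q s (Suc k) x = aw_basis q s k x * ((1 + s * q^k * x) * (1 + s * q^k / x))"
  unfolding aw_basis_def by (simp add: qpoch_Suc algebra_simps)

lemma aw_basis_inverse: "aw_basis q s k (1 / x) = aw_basis q s k x"
  unfolding aw_basis_def by (simp add: mult_ac)

lemma aw_basis_Suc_mult_q:
  assumes "s^2 = q" "x \<noteq> 0" "s \<noteq> 0"
  shows "aw_basis q s (Suc j) (q * x) * (s * x) = aw_basis q s j x * ((1 + s * q^j * x) * (1 + s * q^Suc j * x))"
proof (induction j)
  case 0
  have "q = s * s" using assms(1) by (simp add: power2_eq_square)
  with assms(2,3) show ?case
    unfolding aw_basis_def by (simp add: qpoch_Suc field_simps)
next
  case (Suc j)
  have "s * q^Suc j / (q * x) = s * q^j / x" using assms by (auto simp: field_simps)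
  then show ?case
    using Suc by (simp add: aw_basis_Suc[of q s "Suc j"] aw_basis_Suc[of q s j x] mult_ac)
qed

lemma aw_basis_Suc_divide_q:
  assumes "s^2 = q" "x \<noteq> 0" "s \<noteq> 0"
  shows "aw_basis q s (Suc j) (x / q) * s = aw_basis q s j x * ((x + s * q^j) * (1 + s * q^Suc j / x))"
proof -
  have "q \<noteq> 0" using assms by auto
  then have "aw_basis q s (Suc j) (x / q) = aw_basis q s (Suc j) (q * (1 / x))"
    using aw_basis_inverse[of q s "Suc j" "x / q"] by (simp add: field_simps)
  then have "aw_basis q s (Suc j) (x / q) * (s * (1 / x))
      = aw_basis q s j x * ((1 + s * q^j * (1 / x)) * (1 + s * q^Suc j * (1 / x)))"
    using aw_basis_Suc_mult_q[of s q "1 / x" j] assms by (simp add: aw_basis_inverse)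
  then show ?thesis using assms(2) by (simp add: field_simps)
qed

lemma aw_coeff_0 [simp]: "aw_coeff q N A B 0 = 1"
  by (simp add: aw_coeff_def)

lemma aw_coeff_eq_0: "q \<noteq> 0 \<Longrightarrow> n < k \<Longrightarrow> aw_coeff q (q ^ n) A B k = 0"
  by (simp add: aw_coeff_def qpoch_inverse_power_eq_0)

lemma aw_coeff_Suc:
  assumes "qpoch q q (Suc k) \<noteq> 0" "qpoch q (q / A) (Suc k) \<noteq> 0" "qpoch q (q / B) (Suc k) \<noteq> 0"
  shows "aw_coeff q N A B (Suc k) = aw_coeff q N A B k * (q * (1 - 1 / N * q^k) * (1 - q * N / (A * B) * q^k)
      / ((1 - q * q^k) * (1 - q * q^k) * (1 - q / A * q^k) * (1 - q / B * q^k)))"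
  using assms unfolding aw_coeff_def qpoch_Suc power_Suc by (simp add: field_simps)

lemma aw_coeff_Suc_shift:
  assumes "1 / N' = q * (1 / N)" "q * N' / (A' * B') = q * (q * N / (A * B))"
    "q / A' = q * (q / A)" "q / B' = q * (q / B)"
    "qpoch q q (Suc k) \<noteq> 0" "qpoch q (q / A) (Suc k) \<noteq> 0" "qpoch q (q / B) (Suc k) \<noteq> 0"
  shows "aw_coeff q N A B (Suc k) = aw_coeff q N' A' B' k * (q * (1 - 1 / N) * (1 - q * N / (A * B))
      / ((1 - q * q^k) * (1 - q * q^k) * (1 - q / A) * (1 - q / B)))"
proof -
  have shift: "qpoch q (1 / N) (Suc k) = (1 - 1 / N) * qpoch q (1 / N') k"
     "qpoch q (q * N / (A * B)) (Suc k) = (1 - q * N / (A * B)) * qpoch q (q * N' / (A' * B')) k"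
     "qpoch q (q / A) (Suc k) = (1 - q / A) * qpoch q (q / A') k"
     "qpoch q (q / B) (Suc k) = (1 - q / B) * qpoch q (q / B') k"
    using assms(1-4) by (auto intro!: qpoch_Suc_shift)
  show ?thesis
    using assms(5-7) unfolding aw_coeff_def shift qpoch_Suc[of q q] power_Suc
    by (simp add: field_simps)
qed

lemma aw_norm_Suc_shift:
  assumes "q / A' = q * (q / A)" "q / B' = q * (q / B)" "q ^ (n + 1) / (A' * B') = q * (q ^ (n + 2) / (A * B))"
    "qpoch q (q ^ (n + 2) / (A * B)) (Suc n) \<noteq> 0" "s \<noteq> 0"
  shows "aw_norm q s (Suc n) A B
    = aw_norm q s n A' B' * (- (1 - q ^ Suc n) * (1 - q / A) * (1 - q / B) / (s * (1 - q ^ (n + 2) / (A * B))))"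
proof -
  have shift: "qpoch q (q / A) (Suc n) = (1 - q / A) * qpoch q (q / A') n"
     "qpoch q (q / B) (Suc n) = (1 - q / B) * qpoch q (q / B') n"
     "qpoch q (q ^ (n + 2) / (A * B)) (Suc n) = (1 - q ^ (n + 2) / (A * B)) * qpoch q (q ^ (n + 1) / (A' * B')) n"
    using assms(1-3) by (auto intro!: qpoch_Suc_shift)
  have nonzero: "1 - q ^ (n + 2) / (A * B) \<noteq> 0" "qpoch q (q ^ (n + 1) / (A' * B')) n \<noteq> 0"
    using assms(4) unfolding shift by auto
  have collect: "(-1) ^ Suc n / s ^ Suc n * (X * f * (a * Y) * (b * Z)) / (c * W)
      = (-1) ^ n / s ^ n * (X * Y * Z) / W * (- f * a * b / (s * c))"
    if "c \<noteq> 0" "W \<noteq> 0" for X f a Y b Z c W :: complex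
    using that assms(5) by (simp add: field_simps)
  have "q ^ (Suc n + 1) = q ^ (n + 2)" by simp
  show ?thesis
    unfolding aw_norm_def \<open>q ^ (Suc n + 1) = q ^ (n + 2)\<close> shift qpoch_Suc[of q q] power_Suc[symmetric]
    by (rule collect[OF nonzero])
qed

lemma qpoch_shift_ratio: "qpoch q y k * (1 - y * q^k) = (1 - y) * qpoch q (q * y) k"
  using qpoch_Suc_shift[of "q * y" q y k] by (simp add: qpoch_Suc)

lemma aw_coeff_mixed_shift:
  assumes "q \<noteq> 0" "A \<noteq> 0" "qpoch q (q / A) j \<noteq> 0" "qpoch q (q / B) j \<noteq> 0"
    "1 - q / (q * A) * q^j \<noteq> 0" "1 - q / (q * A) \<noteq> 0" "1 - q / B * q^j \<noteq> 0" "1 - q / B \<noteq> 0"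
  shows "aw_coeff q N (q * A) (B / q) j = aw_coeff q N A B j
    * ((1 - q / (q * A) * q^j) * (1 - q / B) / ((1 - q / (q * A)) * (1 - q / B * q^j)))"
proof -
  have U: "qpoch q (q / (q * A)) j * (1 - q / (q * A) * q^j) = (1 - q / (q * A)) * qpoch q (q / A) j"
    using qpoch_shift_ratio[of q "q / (q * A)" j] assms(1,2) by simp
  have V: "qpoch q (q / B) j * (1 - q / B * q^j) = (1 - q / B) * qpoch q (q / (B / q)) j"
    using qpoch_shift_ratio[of q "q / B" j] by simp
  have ratio: "c / (d * u * v) = c / (d * u' * v') * (f * g' / (g * f'))"
    if "u * f = g * u'" "v' * f' = g' * v" "u' \<noteq> 0" "v' \<noteq> 0" "f \<noteq> 0" "g \<noteq> 0" "f' \<noteq> 0" "g' \<noteq> 0"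
    for c d u v u' v' f g f' g' :: complex
  proof -
    have u: "u = g * u' / f" and v: "v = v' * f' / g'"
      using that by (simp_all add: eq_divide_eq mult.commute)
    show ?thesis
      unfolding u v using that(3-8) by (simp add: field_simps)
  qed
  have AB: "q * A * (B / q) = A * B"
    using assms(1) by simp
  show ?thesis
    unfolding aw_coeff_def AB mult.assoc[symmetric] by (rule ratio[OF U V assms(3-8)])
qed

lemma aw_norm_mixed_shift:
  assumes "q \<noteq> 0" "A \<noteq> 0" "qpoch q (q / (q * A)) n \<noteq> 0" "qpoch q (q / (B / q)) n \<noteq> 0"
    "1 - q / (q * A) * q^n \<noteq> 0" "1 - q / (q * A) \<noteq> 0" "1 - q / B * q^n \<noteq> 0" "1 - q / B \<noteq> 0"
  shows "aw_norm q s n (q * A) (B / q) = aw_norm q s n A B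
    * ((1 - q / (q * A)) * (1 - q / B * q^n) / ((1 - q / (q * A) * q^n) * (1 - q / B)))"
proof -
  have U: "qpoch q (q / (q * A)) n * (1 - q / (q * A) * q^n) = (1 - q / (q * A)) * qpoch q (q / A) n"
    using qpoch_shift_ratio[of q "q / (q * A)" n] assms(1,2) by simp
  have V: "qpoch q (q / B) n * (1 - q / B * q^n) = (1 - q / B) * qpoch q (q / (B / q)) n"
    using qpoch_shift_ratio[of q "q / B" n] by simp
  have ratio: "c * (d * u * v) / e = c * (d * u' * v') / e * (g * f' / (f * g'))"
    if "u * f = g * u'" "v' * f' = g' * v" "u \<noteq> 0" "v \<noteq> 0" "f \<noteq> 0" "g \<noteq> 0" "f' \<noteq> 0" "g' \<noteq> 0"
    for c d e u v u' v' f g f' g' :: complex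
  proof -
    have u: "u' = u * f / g" and v: "v' = g' * v / f'"
      using that by (simp_all add: eq_divide_eq mult.commute)
    show ?thesis
      unfolding u v using that(3-8) by (simp add: field_simps)
  qed
  have AB: "q * A * (B / q) = A * B"
    using assms(1) by simp
  show ?thesis
    unfolding aw_norm_def AB by (rule ratio[OF U V assms(3-8)])
qed

section \<open>\<open>\<A>\<^sub>6\<close> as a sum of four shift operators\<close>

definition weight :: "complex \<Rightarrow> complex \<Rightarrow> complex" where
  "weight s y = y * (1 + s * y) / (s * (1 - y^2) * (1 - s * y))"

definition k_coeff :: "complex \<Rightarrow> bool \<Rightarrow> complex \<Rightarrow> complex \<Rightarrow> complex" where
  "k_coeff s up A y = (if up then - (1 / (1 - A)) else (s * y + A) * (s^3 * y + A) / (s^2 * y * (1 - A)))"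

definition g_coeff :: "complex \<Rightarrow> bool \<Rightarrow> complex \<Rightarrow> complex \<Rightarrow> complex" where
  "g_coeff s up A x = (if up then - (1 / (1 - A)) else (s * x + A) * (s + x * A) / (s * x * (1 - A)))"

text \<open>The part of \<open>\<A>\<^sub>6\<close> in which \<open>\<eth>\<^sub>0\<close> and \<open>\<eth>\<^sub>1\<close> occur with exponent \<open>+1\<close> (flag \<open>True\<close>)
  or \<open>-1\<close> (flag \<open>False\<close>); it acts on a function of \<open>x\<close> alone, the shifts of \<open>x\<^sub>0, x\<^sub>1\<close> being
  applied beforehand.\<close>
definition shift_op ::
    "complex \<Rightarrow> complex \<Rightarrow> bool \<Rightarrow> bool \<Rightarrow> complex \<Rightarrow> complex \<Rightarrow> (complex \<Rightarrow> complex) \<Rightarrow> complex \<Rightarrow> complex" where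
  "shift_op q s a b A B f x =
     weight s x * k_coeff s a A x * k_coeff s b B x * f (q * x)
     + weight s (1 / x) * k_coeff s a A (1 / x) * k_coeff s b B (1 / x) * f (x / q)
     - (weight s x + weight s (1 / x)) * (g_coeff s a A x * g_coeff s b B x) * f x"

lemma shift_op_cmult: "shift_op q s a b A B (\<lambda>z. c * f z) x = c * shift_op q s a b A B f x"
  unfolding shift_op_def by (simp add: algebra_simps)

lemma shift_op_sum:
  "finite S \<Longrightarrow> shift_op q s a b A B (\<lambda>z. \<Sum>k\<in>S. f k z) x = (\<Sum>k\<in>S. shift_op q s a b A B (f k) x)"
  unfolding shift_op_def by (simp add: sum_distrib_left sum.distrib sum_subtractf)

lemma shift_op_swap: "shift_op q s a b A B f x = shift_op q s b a B A f x"
  unfolding shift_op_def by (simp add: mult_ac)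

lemma K0_expand:
  "K0 r 0 e f x x0 x1 = k_coeff (r^2) True (x0^2) (x powi e) * f x (r^2 * x0) x1
     + k_coeff (r^2) False (x0^2) (x powi e) * f x (x0 / r^2) x1"
  "K0 r 1 e f x x0 x1 = k_coeff (r^2) True (x1^2) (x powi e) * f x x0 (r^2 * x1)
     + k_coeff (r^2) False (x1^2) (x powi e) * f x x0 (x1 / r^2)"
  by (simp_all add: K0_def k_coeff_def ethb_def Let_def power_int_minus divide_inverse mult_ac
      power_mult[symmetric])

lemma G0_expand:
  "G0 r 0 f x x0 x1 = g_coeff (r^2) True (x0^2) x * f x (r^2 * x0) x1
     + g_coeff (r^2) False (x0^2) x * f x (x0 / r^2) x1"
  "G0 r 1 f x x0 x1 = g_coeff (r^2) True (x1^2) x * f x x0 (r^2 * x1)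
     + g_coeff (r^2) False (x1^2) x * f x x0 (x1 / r^2)"
  by (simp_all add: G0_def g_coeff_def ethb_def Let_def power_int_minus divide_inverse mult_ac)

lemma A6_eq_shift_ops:
  fixes r q :: complex
  assumes "r^4 = q"
  shows "A6 r F x x0 x1 =
      shift_op q (r^2) True True (x0^2) (x1^2) (\<lambda>z. F z (r^2 * x0) (r^2 * x1)) x
    + shift_op q (r^2) True False (x0^2) (x1^2) (\<lambda>z. F z (r^2 * x0) (x1 / r^2)) x
    + shift_op q (r^2) False True (x0^2) (x1^2) (\<lambda>z. F z (x0 / r^2) (r^2 * x1)) x
    + shift_op q (r^2) False False (x0^2) (x1^2) (\<lambda>z. F z (x0 / r^2) (x1 / r^2)) x"
proof -
  let ?w = "weight (r^2)"
  have "(r^2) powi 2 = q" "(r^2) powi (-2) = inverse q"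
    using assms by (simp_all add: power_int_minus power_mult[symmetric])
  then have eth_pm: "eth r (2 * 1) g = (\<lambda>x x0 x1. g (q * x) x0 x1)"
    "eth r (2 * (-1)) g = (\<lambda>x x0 x1. g (x / q) x0 x1)" for g
    by (simp_all add: eth_def divide_inverse mult_ac)
  have powi_pm: "x powi 1 = x" "x powi (-1) = 1 / x"
    by (simp_all add: power_int_minus divide_inverse)
  have omega_eq: "omega r y = ?w y" for y
    by (simp add: omega_def weight_def)
  have sum_pm: "(\<Sum>e\<in>{1, -1::int}. f e) = f 1 + f (-1)" for f :: "int \<Rightarrow> complex"
    by simp
  have "A6 r F x x0 x1 =
      ?w x * (K0 r 0 1 (K0 r 1 1 (eth r (2 * 1) F)) x x0 x1 - G0 r 0 (G0 r 1 F) x x0 x1)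
    + ?w (1 / x) * (K0 r 0 (-1) (K0 r 1 (-1) (eth r (2 * (-1)) F)) x x0 x1 - G0 r 0 (G0 r 1 F) x x0 x1)"
    unfolding A6_def by (simp only: sum_pm omega_eq powi_pm)
  also have "\<dots> =
      shift_op q (r^2) True True (x0^2) (x1^2) (\<lambda>z. F z (r^2 * x0) (r^2 * x1)) x
    + shift_op q (r^2) True False (x0^2) (x1^2) (\<lambda>z. F z (r^2 * x0) (x1 / r^2)) x
    + shift_op q (r^2) False True (x0^2) (x1^2) (\<lambda>z. F z (x0 / r^2) (r^2 * x1)) x
    + shift_op q (r^2) False False (x0^2) (x1^2) (\<lambda>z. F z (x0 / r^2) (x1 / r^2)) x"
    unfolding K0_expand G0_expand eth_pm powi_pm shift_op_def by algebra
  finally show ?thesis .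
qed

definition k_num :: "complex \<Rightarrow> bool \<Rightarrow> complex \<Rightarrow> complex \<Rightarrow> complex" where
  "k_num s up A x = (if up then - (s^2 * x) else (s * x + A) * (s^3 * x + A))"

definition k_num_inverse :: "complex \<Rightarrow> bool \<Rightarrow> complex \<Rightarrow> complex \<Rightarrow> complex" where
  "k_num_inverse s up A x = (if up then - (s^2 * x) else (s + A * x) * (s^3 + A * x))"

definition g_num :: "complex \<Rightarrow> bool \<Rightarrow> complex \<Rightarrow> complex \<Rightarrow> complex" where
  "g_num s up A x = (if up then - (s * x) else (s * x + A) * (s + x * A))"

locale aw_point =
  fixes q s x A B :: complex
  assumes s_squared: "s^2 = q"
    and s_nonzero: "s \<noteq> 0"
    and x_nonzero: "x \<noteq> 0" and x_squared_ne_1: "x^2 \<noteq> 1"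
    and s_x_ne_1: "s * x \<noteq> 1" and x_ne_s: "x \<noteq> s"
    and A_nonzero: "A \<noteq> 0" and A_ne_1: "A \<noteq> 1"
    and B_nonzero: "B \<noteq> 0" and B_ne_1: "B \<noteq> 1"
    and q_power_ne_1: "\<And>k. 0 < k \<Longrightarrow> q ^ k \<noteq> 1"
begin

lemma q_nonzero: "q \<noteq> 0"
  using s_squared s_nonzero by auto

lemma nonzero_factors: "1 - x^2 \<noteq> 0" "1 - s * x \<noteq> 0" "x - s \<noteq> 0" "1 - A \<noteq> 0" "1 - B \<noteq> 0"
  using x_squared_ne_1 s_x_ne_1 x_ne_s A_ne_1 B_ne_1 by auto

lemma qpoch_q_nonzero: "qpoch q q m \<noteq> 0"
proof -
  have "q * q ^ k \<noteq> 1" for k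
    using q_power_ne_1[of "Suc k"] by simp
  then show ?thesis
    by (auto simp: qpoch_eq_0_iff)
qed

lemma weight_inverse: "weight s (1 / x) = - (x * (x + s)) / (s * (1 - x^2) * (x - s))"
proof -
  note nz = nonzero_factors s_nonzero x_nonzero
  have num: "(1 / x) * (1 + s * (1 / x)) = (x + s) / x^2"
    using nz by (simp add: field_simps power2_eq_square)
  have den: "s * (1 - (1 / x)^2) * (1 - s * (1 / x)) = - (s * (1 - x^2) * (x - s)) / x^3"
    using nz by (simp add: field_simps power2_eq_square power3_eq_cube)
  have "x^3 = x * x^2"
    by (simp add: power2_eq_square power3_eq_cube)
  then show ?thesis
    unfolding weight_def num den using nz by (simp add: divide_simps)
qed

lemma weight_add_inverse: "weight s x + weight s (1 / x) = - 2 * x / ((1 - s * x) * (x - s))"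
proof -
  note nz = nonzero_factors s_nonzero x_nonzero
  let ?D = "s * (1 - x^2) * (1 - s * x) * (x - s)"
  have up: "weight s x = x * (1 + s * x) * (x - s) / ?D"
    unfolding weight_def using nz by (simp add: ac_simps)
  have down: "weight s (1 / x) = - (x * (x + s) * (1 - s * x)) / ?D"
    unfolding weight_inverse using nz by (simp add: ac_simps)
  have "weight s x + weight s (1 / x) = (x * (1 + s * x) * (x - s) - x * (x + s) * (1 - s * x)) / ?D"
    by (simp add: up down diff_divide_distrib)
  also have "x * (1 + s * x) * (x - s) - x * (x + s) * (1 - s * x) = - 2 * x * s * (1 - x^2)"
    by (simp add: algebra_simps power2_eq_square)
  also have "- 2 * x * s * (1 - x^2) / ?D = - 2 * x / ((1 - s * x) * (x - s))"
    by (rule frac_eq_eq[THEN iffD2]) (use nz in \<open>simp_all add: ac_simps\<close>)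
  finally show ?thesis .
qed

lemma k_coeff_eq: "k_coeff s up C x = k_num s up C x / (s^2 * x * (1 - C))"
  and k_coeff_inverse_eq: "k_coeff s up C (1 / x) = k_num_inverse s up C x / (s^2 * x * (1 - C))"
  and g_coeff_eq: "g_coeff s up C x = g_num s up C x / (s * x * (1 - C))"
  if "C \<noteq> 1"
  using that s_nonzero x_nonzero
  by (cases up; simp add: k_coeff_def k_num_def k_num_inverse_def g_coeff_def g_num_def field_simps
      power3_eq_cube)+

lemma shift_op_eq_fraction:
  "shift_op q s a b A B f x =
    ((1 + s * x) * (k_num s a A x * k_num s b B x) * s * x^2 * (x - s) * f (q * x)
     - (x + s) * (k_num_inverse s a A x * k_num_inverse s b B x) * s * x^2 * (1 - s * x) * f (x / q)
     + 2 * s^4 * x^2 * (1 - x^2) * (g_num s a A x * g_num s b B x) * f x)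
    / (s^6 * x^3 * (1 - x^2) * (1 - s * x) * (x - s) * ((1 - A) * (1 - B)))"
proof -
  note nz = nonzero_factors s_nonzero x_nonzero
  let ?D = "s^6 * x^3 * (1 - x^2) * (1 - s * x) * (x - s) * ((1 - A) * (1 - B))"
  have up: "weight s x * k_coeff s a A x * k_coeff s b B x * f (q * x)
      = (1 + s * x) * (k_num s a A x * k_num s b B x) * s * x^2 * (x - s) * f (q * x) / ?D"
    unfolding k_coeff_eq[OF A_ne_1] k_coeff_eq[OF B_ne_1] weight_def
    using nz by (simp add: divide_simps) (simp add: ac_simps power_numeral_reduce)
  have down: "weight s (1 / x) * k_coeff s a A (1 / x) * k_coeff s b B (1 / x) * f (x / q)
      = - ((x + s) * (k_num_inverse s a A x * k_num_inverse s b B x) * s * x^2 * (1 - s * x) * f (x / q)) / ?D"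
    unfolding k_coeff_inverse_eq[OF A_ne_1] k_coeff_inverse_eq[OF B_ne_1] weight_inverse
    using nz by (simp add: divide_simps) (simp add: ac_simps power_numeral_reduce)
  have diag: "(weight s x + weight s (1 / x)) * (g_coeff s a A x * g_coeff s b B x) * f x
      = - (2 * s^4 * x^2 * (1 - x^2) * (g_num s a A x * g_num s b B x) * f x) / ?D"
    unfolding g_coeff_eq[OF A_ne_1] g_coeff_eq[OF B_ne_1] weight_add_inverse
    using nz by (simp add: divide_simps) (simp add: ac_simps power_numeral_reduce)
  show ?thesis
    unfolding shift_op_def up down diag by (simp add: add_divide_distrib diff_divide_distrib)
qed

lemma aw_basis_neighbours:
  "aw_basis q s (Suc j) (q * x) * (s * x) = aw_basis q s j x * ((1 + s * q^j * x) * (1 + s * q^Suc j * x))"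
  "aw_basis q s (Suc j) (x / q) * (s * x) = aw_basis q s j x * ((x + s * q^j) * (x + s * q^Suc j))"
  "aw_basis q s (Suc j) x * x = aw_basis q s j x * ((1 + s * q^j * x) * (x + s * q^j))"
  "aw_basis q s (Suc (Suc j)) x * x^2
     = aw_basis q s j x * ((1 + s * q^j * x) * (x + s * q^j) * (1 + s * q^Suc j * x) * (x + s * q^Suc j))"
proof -
  have times_x: "(1 + s * q^i / x) * x = x + s * q^i" for i
    using x_nonzero by (simp add: field_simps)
  show "aw_basis q s (Suc j) (q * x) * (s * x) = aw_basis q s j x * ((1 + s * q^j * x) * (1 + s * q^Suc j * x))"
    by (rule aw_basis_Suc_mult_q[OF s_squared x_nonzero s_nonzero])
  have "aw_basis q s (Suc j) (x / q) * (s * x) = aw_basis q s j x * ((x + s * q^j) * ((1 + s * q^Suc j / x) * x))"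
    using aw_basis_Suc_divide_q[OF s_squared x_nonzero s_nonzero, of j] by (simp add: mult_ac)
  then show "aw_basis q s (Suc j) (x / q) * (s * x) = aw_basis q s j x * ((x + s * q^j) * (x + s * q^Suc j))"
    unfolding times_x .
  show step: "aw_basis q s (Suc j) x * x = aw_basis q s j x * ((1 + s * q^j * x) * (x + s * q^j))"
    unfolding aw_basis_Suc using times_x[of j] by (metis mult.assoc mult.left_commute)
  have "aw_basis q s (Suc (Suc j)) x * x^2
      = (aw_basis q s (Suc j) x * x) * ((1 + s * q^Suc j * x) * (x + s * q^Suc j))"
    unfolding aw_basis_Suc[of q s "Suc j"] using times_x[of "Suc j"] by (simp add: power2_eq_square mult_ac)
  then show "aw_basis q s (Suc (Suc j)) x * x^2
     = aw_basis q s j x * ((1 + s * q^j * x) * (x + s * q^j) * (1 + s * q^Suc j * x) * (x + s * q^Suc j))"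
    unfolding step by (simp add: mult_ac)
qed

end

section \<open>Action on the Askey-Wilson basis\<close>

text \<open>Numerators of the coefficients of \<open>\<phi>\<^sub>k\<^sub>+\<^sub>1\<close>, \<open>\<phi>\<^sub>k\<close>, \<open>\<phi>\<^sub>k\<^sub>-\<^sub>1\<close> in the image of \<open>\<phi>\<^sub>k\<close>,
  as polynomials in \<open>Q = q\<^sup>k\<close>: they are what remains of the numerator of \<open>shift_op_eq_fraction\<close>
  after dividing out \<open>(1 - x\<^sup>2)(1 - s x)(x - s)\<close>, which \<open>basis_action_numerator\<close> certifies.\<close>
definition raise_num :: "complex \<Rightarrow> bool \<Rightarrow> bool \<Rightarrow> complex \<Rightarrow> complex \<Rightarrow> complex \<Rightarrow> complex" where
  "raise_num s a b A B Q = (if a \<or> b then 0 else (s^4 * Q - A * B)^2)"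

definition level_num :: "complex \<Rightarrow> bool \<Rightarrow> bool \<Rightarrow> complex \<Rightarrow> complex \<Rightarrow> complex \<Rightarrow> complex" where
  "level_num s a b A B Q =
    (if a then (if b then 0 else - (s^3 * Q * (s^2 * Q - B)^2))
     else if b then - (s^3 * Q * (s^2 * Q - A)^2)
     else - (s^8 * (1 + s^2) * Q^4) + Q^3 * (2 * s^8 + (1 + s^2) * (A + B) * s^6 + 2 * A * B * s^6)
       - Q^2 * (2 * (A + B) * s^6 + 2 * (1 + s^2) * A * B * s^4 + 2 * A * B * (A + B) * s^4)
       + Q * (2 * A * B * s^4 + (1 + s^2) * A * B * (A + B) * s^2 + 2 * A^2 * B^2 * s^2)
       - (1 + s^2) * A^2 * B^2)"

definition lower_num :: "complex \<Rightarrow> bool \<Rightarrow> bool \<Rightarrow> complex \<Rightarrow> complex \<Rightarrow> complex \<Rightarrow> complex" where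
  "lower_num s a b A B Q =
    (if a then (if b then s^4 * Q^2 * (1 - Q)^2 else s^3 * Q * (1 - Q)^2 * (s^2 * Q - B) * (Q - B))
     else if b then s^3 * Q * (1 - Q)^2 * (s^2 * Q - A) * (Q - A)
     else s^2 * (1 - Q)^2 * (s^2 * Q - A) * (s^2 * Q - B) * (Q - A) * (Q - B))"

definition raise_coeff :: "complex \<Rightarrow> bool \<Rightarrow> bool \<Rightarrow> complex \<Rightarrow> complex \<Rightarrow> complex \<Rightarrow> complex" where
  "raise_coeff s a b A B Q = raise_num s a b A B Q / (s^6 * Q^2 * ((1 - A) * (1 - B)))"

definition level_coeff :: "complex \<Rightarrow> bool \<Rightarrow> bool \<Rightarrow> complex \<Rightarrow> complex \<Rightarrow> complex \<Rightarrow> complex" where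
  "level_coeff s a b A B Q = level_num s a b A B Q / (s^6 * Q^2 * ((1 - A) * (1 - B)))"

definition lower_coeff :: "complex \<Rightarrow> bool \<Rightarrow> bool \<Rightarrow> complex \<Rightarrow> complex \<Rightarrow> complex \<Rightarrow> complex" where
  "lower_coeff s a b A B Q = lower_num s a b A B Q / (s^6 * Q^2 * ((1 - A) * (1 - B)))"

lemma basis_action_numerator:
  fixes s x P A B :: complex
  shows "((1 + s * x) * (k_num s a A x * k_num s b B x) * (x - s) * ((1 + s * P * x) * (1 + s * (s^2 * P) * x))
      - (x + s) * (k_num_inverse s a A x * k_num_inverse s b B x) * (1 - s * x)
        * ((x + s * P) * (x + s * (s^2 * P)))
      + 2 * s^4 * (1 - x^2) * (g_num s a A x * g_num s b B x) * ((1 + s * P * x) * (x + s * P))) * (s^2 * P)^2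
    = (raise_num s a b A B (s^2 * P)
        * ((1 + s * P * x) * (x + s * P) * (1 + s * (s^2 * P) * x) * (x + s * (s^2 * P)))
      + level_num s a b A B (s^2 * P) * ((1 + s * P * x) * (x + s * P)) * x
      + lower_num s a b A B (s^2 * P) * x^2) * ((1 - x^2) * (1 - s * x) * (x - s))"
  by (cases a; cases b; simp only: raise_num_def level_num_def lower_num_def k_num_def k_num_inverse_def
      g_num_def if_True if_False simp_thms; algebra)

lemma basis_action_numerator_0:
  fixes s x A B :: complex
  shows "s * (1 + s * x) * (k_num s a A x * k_num s b B x) * (x - s)
      - s * (x + s) * (k_num_inverse s a A x * k_num_inverse s b B x) * (1 - s * x)
      + 2 * s^4 * (1 - x^2) * (g_num s a A x * g_num s b B x)
    = (raise_num s a b A B 1 * ((1 + s * x) * (x + s)) + level_num s a b A B 1 * x)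
      * ((1 - x^2) * (1 - s * x) * (x - s))"
  by (cases a; cases b; simp only: raise_num_def level_num_def k_num_def k_num_inverse_def
      g_num_def if_True if_False simp_thms power_one mult_1_left mult_1_right; algebra)

lemma lower_num_1: "lower_num s a b A B 1 = 0"
  by (simp add: lower_num_def)

context aw_point
begin

lemma shift_op_aw_basis_0:
  "shift_op q s a b A B (aw_basis q s 0) x
     = raise_coeff s a b A B 1 * aw_basis q s 1 x + level_coeff s a b A B 1 * aw_basis q s 0 x"
proof -
  note nz = nonzero_factors s_nonzero x_nonzero
  let ?K = "k_num s a A x * k_num s b B x" and ?K' = "k_num_inverse s a A x * k_num_inverse s b B x"
    and ?H = "g_num s a A x * g_num s b B x"
    and ?R = "(raise_num s a b A B 1 * ((1 + s * x) * (x + s)) + level_num s a b A B 1 * x)"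
  have basis: "aw_basis q s 0 = (\<lambda>_. 1)" "aw_basis q s 1 x = (1 + s * x) * (1 + s / x)"
    by (simp_all add: aw_basis_def qpoch_def fun_eq_iff)
  have "(1 + s * x) * ?K * s * x^2 * (x - s) * 1 - (x + s) * ?K' * s * x^2 * (1 - s * x) * 1
      + 2 * s^4 * x^2 * (1 - x^2) * ?H * 1
    = x^2 * (s * (1 + s * x) * ?K * (x - s) - s * (x + s) * ?K' * (1 - s * x) + 2 * s^4 * (1 - x^2) * ?H)"
    by (simp add: algebra_simps)
  also have "\<dots> = x^2 * (?R * ((1 - x^2) * (1 - s * x) * (x - s)))"
    by (simp only: basis_action_numerator_0)
  finally show ?thesis
    unfolding shift_op_eq_fraction basis raise_coeff_def level_coeff_def
    using nz by (simp add: divide_simps) (simp add: algebra_simps power_numeral_reduce)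
qed

lemma shift_op_aw_basis_Suc_numerator:
  "((1 + s * x) * (k_num s a A x * k_num s b B x) * s * x^2 * (x - s) * aw_basis q s (Suc j) (q * x)
      - (x + s) * (k_num_inverse s a A x * k_num_inverse s b B x) * s * x^2 * (1 - s * x)
        * aw_basis q s (Suc j) (x / q)
      + 2 * s^4 * x^2 * (1 - x^2) * (g_num s a A x * g_num s b B x) * aw_basis q s (Suc j) x) * (q^Suc j)^2
    = x * aw_basis q s j x
      * ((raise_num s a b A B (q^Suc j)
            * ((1 + s * q^j * x) * (x + s * q^j) * (1 + s * q^Suc j * x) * (x + s * q^Suc j))
          + level_num s a b A B (q^Suc j) * ((1 + s * q^j * x) * (x + s * q^j)) * x
          + lower_num s a b A B (q^Suc j) * x^2)
        * ((1 - x^2) * (1 - s * x) * (x - s)))"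
  (is "?N * _ = x * ?p * (?R * ?W)")
proof -
  let ?K = "k_num s a A x * k_num s b B x" and ?K' = "k_num_inverse s a A x * k_num_inverse s b B x"
    and ?H = "g_num s a A x * g_num s b B x"
    and ?u = "1 + s * q^j * x" and ?v = "1 + s * q^Suc j * x"
    and ?u' = "x + s * q^j" and ?v' = "x + s * q^Suc j"
  have "q^Suc j = s^2 * q^j"
    using s_squared by simp
  then have numerator: "((1 + s * x) * ?K * (x - s) * (?u * ?v) - (x + s) * ?K' * (1 - s * x) * (?u' * ?v')
      + 2 * s^4 * (1 - x^2) * ?H * (?u * ?u')) * (q^Suc j)^2 = ?R * ?W"
    by (simp only: basis_action_numerator)
  have "?N * (q^Suc j)^2
    = ((1 + s * x) * ?K * x * (x - s) * (aw_basis q s (Suc j) (q * x) * (s * x))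
      - (x + s) * ?K' * x * (1 - s * x) * (aw_basis q s (Suc j) (x / q) * (s * x))
      + 2 * s^4 * x * (1 - x^2) * ?H * (aw_basis q s (Suc j) x * x)) * (q^Suc j)^2"
    by (simp add: algebra_simps power2_eq_square)
  also have "\<dots> = x * ?p * (((1 + s * x) * ?K * (x - s) * (?u * ?v) - (x + s) * ?K' * (1 - s * x) * (?u' * ?v')
      + 2 * s^4 * (1 - x^2) * ?H * (?u * ?u')) * (q^Suc j)^2)"
    unfolding aw_basis_neighbours by (simp add: algebra_simps)
  finally show ?thesis
    unfolding numerator .
qed

lemma shift_op_aw_basis_Suc:
  "shift_op q s a b A B (aw_basis q s (Suc j)) x
     = raise_coeff s a b A B (q^Suc j) * aw_basis q s (Suc (Suc j)) x
     + level_coeff s a b A B (q^Suc j) * aw_basis q s (Suc j) x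
     + lower_coeff s a b A B (q^Suc j) * aw_basis q s j x"
proof -
  let ?D = "s^6 * x^3 * (1 - x^2) * (1 - s * x) * (x - s) * ((1 - A) * (1 - B))"
  have basis: "aw_basis q s (Suc (Suc j)) x
      = aw_basis q s j x * ((1 + s * q^j * x) * (x + s * q^j) * (1 + s * q^Suc j * x) * (x + s * q^Suc j)) / x^2"
    "aw_basis q s (Suc j) x = aw_basis q s j x * ((1 + s * q^j * x) * (x + s * q^j)) / x"
    using aw_basis_neighbours(3,4)[of j] x_nonzero by (simp_all add: eq_divide_eq)
  have "shift_op q s a b A B (aw_basis q s (Suc j)) x
      = x * aw_basis q s j x
      * ((raise_num s a b A B (q^Suc j)
            * ((1 + s * q^j * x) * (x + s * q^j) * (1 + s * q^Suc j * x) * (x + s * q^Suc j))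
          + level_num s a b A B (q^Suc j) * ((1 + s * q^j * x) * (x + s * q^j)) * x
          + lower_num s a b A B (q^Suc j) * x^2)
        * ((1 - x^2) * (1 - s * x) * (x - s))) / (?D * (q^Suc j)^2)"
    unfolding shift_op_eq_fraction shift_op_aw_basis_Suc_numerator[symmetric] using q_nonzero by simp
  also have "\<dots> = raise_coeff s a b A B (q^Suc j) * aw_basis q s (Suc (Suc j)) x
     + level_coeff s a b A B (q^Suc j) * aw_basis q s (Suc j) x
     + lower_coeff s a b A B (q^Suc j) * aw_basis q s j x"
    unfolding raise_coeff_def level_coeff_def lower_coeff_def basis
    using nonzero_factors s_nonzero x_nonzero q_nonzero
    by (simp add: divide_simps) (simp add: algebra_simps power_numeral_reduce)
  finally show ?thesis .
qed

lemma shift_op_aw_basis: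
  "shift_op q s a b A B (aw_basis q s k) x
     = raise_coeff s a b A B (q^k) * aw_basis q s (Suc k) x + level_coeff s a b A B (q^k) * aw_basis q s k x
     + lower_coeff s a b A B (q^k) * aw_basis q s (k - 1) x"
proof (cases k)
  case 0
  then show ?thesis
    using shift_op_aw_basis_0 by (simp add: lower_coeff_def lower_num_1)
next
  case (Suc j)
  then show ?thesis
    using shift_op_aw_basis_Suc by simp
qed

end

lemma sum_atMost_three_term_reindex:
  fixes c a b g :: "nat \<Rightarrow> complex"
  assumes "c (Suc n) = 0" "c (Suc (Suc n)) = 0" "g 0 = 0"
  shows "(\<Sum>k\<le>n. c k * (a k * f (Suc k) + b k * f k + g k * f (k - 1)))
     = (\<Sum>j\<le>Suc n. ((if j = 0 then 0 else c (j - 1) * a (j - 1)) + c j * b j + c (Suc j) * g (Suc j)) * f j)"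
proof -
  have raised: "(\<Sum>j\<le>Suc n. (if j = 0 then 0 else c (j - 1) * a (j - 1)) * f j) = (\<Sum>k\<le>n. c k * a k * f (Suc k))"
    by (subst sum.atMost_Suc_shift) simp
  have level: "(\<Sum>j\<le>Suc n. c j * b j * f j) = (\<Sum>k\<le>n. c k * b k * f k)"
    using assms(1) by simp
  have "(\<Sum>k\<le>Suc (Suc n). c k * g k * f (k - 1)) = c 0 * g 0 * f (0 - 1) + (\<Sum>j\<le>Suc n. c (Suc j) * g (Suc j) * f j)"
    by (subst sum.atMost_Suc_shift) simp
  then have lowered: "(\<Sum>j\<le>Suc n. c (Suc j) * g (Suc j) * f j) = (\<Sum>k\<le>n. c k * g k * f (k - 1))"
    using assms by simp
  show ?thesis
    unfolding distrib_right sum.distrib raised level lowered by (simp add: sum.distrib algebra_simps)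
qed

definition image_coeff ::
    "complex \<Rightarrow> complex \<Rightarrow> bool \<Rightarrow> bool \<Rightarrow> complex \<Rightarrow> complex \<Rightarrow> complex \<Rightarrow> complex \<Rightarrow> complex \<Rightarrow> nat \<Rightarrow> complex" where
  "image_coeff q s a b A B N A' B' j =
     (if j = 0 then 0 else aw_coeff q N A' B' (j - 1) * raise_coeff s a b A B (q^(j - 1)))
     + aw_coeff q N A' B' j * level_coeff s a b A B (q^j)
     + aw_coeff q N A' B' (Suc j) * lower_coeff s a b A B (q^Suc j)"

context aw_point
begin

lemma shift_op_aw_poly:
  "shift_op q s a b A B (\<lambda>z. aw_poly q s n z A' B') x
     = aw_norm q s n A' B' * (\<Sum>j\<le>Suc n. image_coeff q s a b A B (q^n) A' B' j * aw_basis q s j x)"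
proof -
  have "shift_op q s a b A B (\<lambda>z. aw_poly q s n z A' B') x
     = aw_norm q s n A' B' * (\<Sum>k\<le>n. aw_coeff q (q^n) A' B' k * shift_op q s a b A B (aw_basis q s k) x)"
    unfolding aw_poly_def by (simp add: shift_op_cmult shift_op_sum)
  also have "\<dots> = aw_norm q s n A' B' * (\<Sum>j\<le>Suc n. image_coeff q s a b A B (q^n) A' B' j * aw_basis q s j x)"
    unfolding shift_op_aw_basis image_coeff_def
    by (subst sum_atMost_three_term_reindex)
      (simp_all add: aw_coeff_eq_0 q_nonzero lower_coeff_def lower_num_1)
  finally show ?thesis .
qed

lemma shift_op_aw_poly_eqI:
  assumes coeff: "\<And>j. aw_norm q s n A' B' * image_coeff q s a b A B (q^n) A' B' j
      = c * aw_norm q s m A B * aw_coeff q (q^m) A B j"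
    and "m \<le> Suc n"
  shows "shift_op q s a b A B (\<lambda>z. aw_poly q s n z A' B') x = c * aw_poly q s m x A B"
proof -
  have "shift_op q s a b A B (\<lambda>z. aw_poly q s n z A' B') x
      = (\<Sum>j\<le>Suc n. c * aw_norm q s m A B * (aw_coeff q (q^m) A B j * aw_basis q s j x))"
    unfolding shift_op_aw_poly sum_distrib_left mult.assoc[symmetric] coeff ..
  also have "\<dots> = c * aw_norm q s m A B * (\<Sum>j\<le>Suc n. aw_coeff q (q^m) A B j * aw_basis q s j x)"
    unfolding sum_distrib_left by (simp add: mult.assoc)
  also have "(\<Sum>j\<le>Suc n. aw_coeff q (q^m) A B j * aw_basis q s j x)
      = (\<Sum>j\<le>m. aw_coeff q (q^m) A B j * aw_basis q s j x)"
    by (rule sum.mono_neutral_right) (use \<open>m \<le> Suc n\<close> in \<open>auto simp: aw_coeff_eq_0 q_nonzero\<close>)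
  finally show ?thesis
    unfolding aw_poly_def by (simp add: mult.assoc)
qed

end

section \<open>Contiguous relations\<close>

lemma lowering_factor_identity:
  fixes s q A B N Q :: complex
  assumes "s^2 = q" "s \<noteq> 0" "A \<noteq> 0" "B \<noteq> 0" "Q \<noteq> 0" "N \<noteq> 0" "1 - A \<noteq> 0" "1 - B \<noteq> 0"
    "1 - q * Q \<noteq> 0" "1 - q * N / ((q * A) * (q * B)) \<noteq> 0"
  shows "(- (1 - N) * (1 - q / (q * A)) * (1 - q / (q * B)) / (s * (1 - q * N / ((q * A) * (q * B)))))
       * (q * (1 - 1 / N) * (1 - q * N / ((q * A) * (q * B)))
          / ((1 - q * Q) * (1 - q * Q) * (1 - q / (q * A)) * (1 - q / (q * B))))
       * lower_coeff s True True A B (q * Q)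
     = (1 - N)^2 / (s * N * ((1 - A) * (1 - B)))"
proof -
  have q: "q \<noteq> 0"
    using assms(1,2) by auto
  have factors: "1 - q / (q * A) = (A - 1) / A" "1 - q / (q * B) = (B - 1) / B" "1 - 1 / N = (N - 1) / N"
     "1 - q * N / ((q * A) * (q * B)) = (q * A * B - N) / (q * A * B)"
    using assms q by (auto simp: field_simps)
  have "A - 1 \<noteq> 0" "B - 1 \<noteq> 0" "q * A * B - N \<noteq> 0"
    using assms q factors(4) by auto
  note nz = this assms(2-9) q
  show ?thesis
    unfolding factors lower_coeff_def lower_num_def if_True
    apply (simp only: times_divide_times_eq divide_divide_eq_left divide_divide_eq_right
        times_divide_eq_left times_divide_eq_right minus_divide_left)
    apply (rule frac_eq_eq[THEN iffD2, rotated 2])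
    subgoal unfolding assms(1)[symmetric] by algebra
    using nz by simp_all
qed

lemma mixed_factor_identity:
  fixes s q A B N Q :: complex
  assumes "s^2 = q" "s \<noteq> 0" "A \<noteq> 0" "B \<noteq> 0" "Q \<noteq> 0" "N \<noteq> 0" "1 - A \<noteq> 0" "1 - B \<noteq> 0"
     "1 - q * Q \<noteq> 0" "A - N \<noteq> 0" "B - q \<noteq> 0" "A - Q \<noteq> 0" "B - q * Q \<noteq> 0" "B - q * q * Q \<noteq> 0"
  shows "((1 - q / (q * A)) * (1 - q / B * N) / ((1 - q / (q * A) * N) * (1 - q / B)))
       * ((1 - q / (q * A) * Q) * (1 - q / B) / ((1 - q / (q * A)) * (1 - q / B * Q)))
       * (level_coeff s True False A B Q
          + (q * (1 - 1 / N * Q) * (1 - q * N / (A * B) * Q)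
             / ((1 - q * Q) * (1 - q * Q) * (1 - q / (q * A) * Q) * (1 - q / (B / q) * Q)))
            * lower_coeff s True False A B (q * Q))
     = - ((B - q * N)^2 / (s^3 * N * ((1 - A) * (1 - B))))"
proof -
  have q: "q \<noteq> 0"
    using assms(1,2) by auto
  note nz = assms(2-14) q
  have factors: "1 - q / (q * A) = (A - 1) / A" "1 - q / (q * A) * Q = (A - Q) / A"
    "1 - q / (q * A) * N = (A - N) / A"
    "1 - q / B * Q = (B - q * Q) / B" "1 - q / B = (B - q) / B" "1 - q / B * N = (B - q * N) / B"
    "1 - 1 / N * Q = (N - Q) / N" "1 - q * N / (A * B) * Q = (A * B - q * N * Q) / (A * B)"
    "1 - q / (B / q) * Q = (B - q * q * Q) / B"
    using nz by (simp_all add: field_simps)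
  have norm_ratio: "(1 - q / (q * A)) * (1 - q / B * N) / ((1 - q / (q * A) * N) * (1 - q / B))
      = ((A - 1) * (B - q * N)) / ((A - N) * (B - q))"
    unfolding factors
    apply (simp only: times_divide_times_eq divide_divide_eq_left divide_divide_eq_right
        times_divide_eq_left times_divide_eq_right)
    apply (rule frac_eq_eq[THEN iffD2, rotated 2])
    subgoal by algebra
    using nz by simp_all
  have coeff_ratio: "(1 - q / (q * A) * Q) * (1 - q / B) / ((1 - q / (q * A)) * (1 - q / B * Q))
      = ((A - Q) * (B - q)) / ((A - 1) * (B - q * Q))"
    unfolding factors
    apply (simp only: times_divide_times_eq divide_divide_eq_left divide_divide_eq_right
        times_divide_eq_left times_divide_eq_right)
    apply (rule frac_eq_eq[THEN iffD2, rotated 2])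
    subgoal by algebra
    using nz by simp_all
  have step_ratio: "q * (1 - 1 / N * Q) * (1 - q * N / (A * B) * Q)
        / ((1 - q * Q) * (1 - q * Q) * (1 - q / (q * A) * Q) * (1 - q / (B / q) * Q))
      = (q * (N - Q) * (A * B - q * N * Q)) / (N * ((1 - q * Q) * (1 - q * Q)) * (A - Q) * (B - q * q * Q))"
    unfolding factors
    apply (simp only: times_divide_times_eq divide_divide_eq_left divide_divide_eq_right
        times_divide_eq_left times_divide_eq_right)
    apply (rule frac_eq_eq[THEN iffD2, rotated 2])
    subgoal by algebra
    using nz by simp_all
  have combine: "(a / b) * (c / d) * (e / f + (g / h) * (i / k)) = l / m"
    if "a * c * (e * h * k + g * i * f) * m = l * b * d * f * h * k"
      and "b \<noteq> 0" "d \<noteq> 0" "f \<noteq> 0" "h \<noteq> 0" "k \<noteq> 0" "m \<noteq> 0"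
    for a b c d e f g h i k l m :: complex
    using that by (simp add: field_simps)
  show ?thesis
    unfolding norm_ratio coeff_ratio step_ratio level_coeff_def lower_coeff_def minus_divide_left
    apply (rule combine)
    subgoal unfolding level_num_def lower_num_def if_True if_False assms(1)[symmetric] by algebra
    using nz by simp_all
qed

locale aw_lowering = aw_point +
  fixes n :: nat
  assumes qpoch_A_up: "\<And>m. m \<le> Suc n \<Longrightarrow> qpoch q (q / (q * A)) m \<noteq> 0"
    and qpoch_B_up: "\<And>m. m \<le> Suc n \<Longrightarrow> qpoch q (q / (q * B)) m \<noteq> 0"
    and qpoch_AB_up: "qpoch q (q ^ (Suc n + 1) / ((q * A) * (q * B))) (Suc n) \<noteq> 0"
begin

lemma lowering_nonzero: "1 - q * q ^ Suc n / ((q * A) * (q * B)) \<noteq> 0"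
proof -
  have "qpoch q (q ^ (Suc n + 1) / ((q * A) * (q * B))) (Suc n)
      = (1 - q ^ (Suc n + 1) / ((q * A) * (q * B))) * qpoch q (q * (q ^ (Suc n + 1) / ((q * A) * (q * B)))) n"
    by (rule qpoch_Suc_shift) simp
  then show ?thesis
    using qpoch_AB_up by auto
qed

lemma lowering_norm:
  "aw_norm q s (Suc n) (q * A) (q * B) = aw_norm q s n A B
    * (- (1 - q ^ Suc n) * (1 - q / (q * A)) * (1 - q / (q * B))
       / (s * (1 - q * q ^ Suc n / ((q * A) * (q * B)))))"
proof -
  have "aw_norm q s (Suc n) (q * A) (q * B) = aw_norm q s n A B
    * (- (1 - q ^ Suc n) * (1 - q / (q * A)) * (1 - q / (q * B)) / (s * (1 - q ^ (n + 2) / ((q * A) * (q * B)))))"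
    by (rule aw_norm_Suc_shift)
      (use q_nonzero A_nonzero B_nonzero qpoch_AB_up s_nonzero in \<open>simp_all add: field_simps\<close>)
  then show ?thesis
    by simp
qed

lemma lowering_coeff_shift:
  assumes "j \<le> n"
  shows "aw_coeff q (q ^ Suc n) (q * A) (q * B) (Suc j) = aw_coeff q (q ^ n) A B j
    * (q * (1 - 1 / q ^ Suc n) * (1 - q * q ^ Suc n / ((q * A) * (q * B)))
       / ((1 - q * q ^ j) * (1 - q * q ^ j) * (1 - q / (q * A)) * (1 - q / (q * B))))"
  by (rule aw_coeff_Suc_shift)
    (use q_nonzero A_nonzero B_nonzero qpoch_q_nonzero qpoch_A_up qpoch_B_up assms
      in \<open>simp_all add: field_simps\<close>)

lemma lowering_coeff:
  "aw_norm q s (Suc n) (q * A) (q * B) * image_coeff q s True True A B (q ^ Suc n) (q * A) (q * B) j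
    = (1 - q ^ Suc n)^2 / (s * q ^ Suc n * ((1 - A) * (1 - B))) * aw_norm q s n A B * aw_coeff q (q ^ n) A B j"
proof (cases "j \<le> n")
  case True
  define N where "N = q ^ Suc n"
  define ratio_norm where "ratio_norm =
    - (1 - N) * (1 - q / (q * A)) * (1 - q / (q * B)) / (s * (1 - q * N / ((q * A) * (q * B))))"
  define ratio_coeff where "ratio_coeff = q * (1 - 1 / N) * (1 - q * N / ((q * A) * (q * B)))
       / ((1 - q * q ^ j) * (1 - q * q ^ j) * (1 - q / (q * A)) * (1 - q / (q * B)))"
  have "N \<noteq> 0" "1 - q * N / ((q * A) * (q * B)) \<noteq> 0" "1 - q * q ^ j \<noteq> 0"
    using q_nonzero lowering_nonzero q_power_ne_1[of "Suc j"] by (simp_all add: N_def)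
  then have factor: "ratio_norm * ratio_coeff * lower_coeff s True True A B (q * q ^ j)
      = (1 - N)^2 / (s * N * ((1 - A) * (1 - B)))"
    unfolding ratio_norm_def ratio_coeff_def
    using lowering_factor_identity[OF s_squared s_nonzero A_nonzero B_nonzero] q_nonzero nonzero_factors
    by simp
  have norm: "aw_norm q s (Suc n) (q * A) (q * B) = aw_norm q s n A B * ratio_norm"
    unfolding ratio_norm_def N_def by (rule lowering_norm)
  have coeff: "aw_coeff q N (q * A) (q * B) (Suc j) = aw_coeff q (q ^ n) A B j * ratio_coeff"
    unfolding ratio_coeff_def N_def by (rule lowering_coeff_shift[OF True])
  have "aw_norm q s (Suc n) (q * A) (q * B) * image_coeff q s True True A B N (q * A) (q * B) j
      = aw_norm q s n A B * aw_coeff q (q ^ n) A B j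
        * (ratio_norm * ratio_coeff * lower_coeff s True True A B (q * q ^ j))"
    unfolding image_coeff_def norm coeff power_Suc[of q j]
    by (simp add: raise_coeff_def raise_num_def level_coeff_def level_num_def ac_simps)
  then show ?thesis
    unfolding factor N_def by (simp add: ac_simps)
next
  case False
  then have "aw_coeff q (q ^ Suc n) (q * A) (q * B) (Suc j) = 0" "aw_coeff q (q ^ n) A B j = 0"
    using q_nonzero by (intro aw_coeff_eq_0; simp)+
  then show ?thesis
    by (simp add: image_coeff_def raise_coeff_def raise_num_def level_coeff_def level_num_def)
qed

lemma shift_op_lowering:
  "shift_op q s True True A B (\<lambda>z. aw_poly q s (Suc n) z (q * A) (q * B)) x
    = (1 - q ^ Suc n)^2 / (s * q ^ Suc n * ((1 - A) * (1 - B))) * aw_poly q s n x A B"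
  by (rule shift_op_aw_poly_eqI[OF lowering_coeff]) simp

end

locale aw_mixed = aw_point +
  fixes n :: nat
  assumes qpoch_A_up: "\<And>m. m \<le> Suc n \<Longrightarrow> qpoch q (q / (q * A)) m \<noteq> 0"
    and qpoch_B_down: "\<And>m. m \<le> Suc n \<Longrightarrow> qpoch q (q / (B / q)) m \<noteq> 0"
    and qpoch_A: "\<And>m. m \<le> Suc n \<Longrightarrow> qpoch q (q / A) m \<noteq> 0"
    and qpoch_B: "\<And>m. m \<le> Suc n \<Longrightarrow> qpoch q (q / B) m \<noteq> 0"
begin

lemma mixed_nonzero:
  assumes "k \<le> n"
  shows "1 - q / (q * A) * q ^ k \<noteq> 0" "1 - q / B * q ^ k \<noteq> 0" "1 - q / (B / q) * q ^ k \<noteq> 0"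
  using qpoch_A_up[of "Suc n"] qpoch_B[of "Suc n"] qpoch_B_down[of "Suc n"] assms
  by (auto simp: qpoch_eq_0_iff)

lemma mixed_norm:
  "aw_norm q s n (q * A) (B / q) = aw_norm q s n A B
    * ((1 - q / (q * A)) * (1 - q / B * q ^ n) / ((1 - q / (q * A) * q ^ n) * (1 - q / B)))"
  using mixed_nonzero[of n] mixed_nonzero[of 0]
  by (intro aw_norm_mixed_shift q_nonzero A_nonzero qpoch_A_up qpoch_B_down) simp_all

lemma mixed_coeff_ratio:
  assumes "j \<le> n"
  shows "aw_coeff q (q ^ n) (q * A) (B / q) j = aw_coeff q (q ^ n) A B j
    * ((1 - q / (q * A) * q ^ j) * (1 - q / B) / ((1 - q / (q * A)) * (1 - q / B * q ^ j)))"
  using mixed_nonzero[OF assms] mixed_nonzero[of 0] assms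
  by (intro aw_coeff_mixed_shift q_nonzero A_nonzero qpoch_A qpoch_B) simp_all

lemma mixed_coeff_step:
  assumes "j \<le> n"
  shows "aw_coeff q (q ^ n) (q * A) (B / q) (Suc j) = aw_coeff q (q ^ n) (q * A) (B / q) j
    * (q * (1 - 1 / q ^ n * q ^ j) * (1 - q * q ^ n / (A * B) * q ^ j)
       / ((1 - q * q ^ j) * (1 - q * q ^ j) * (1 - q / (q * A) * q ^ j) * (1 - q / (B / q) * q ^ j)))"
proof -
  have "q * A * (B / q) = A * B"
    using q_nonzero by simp
  then show ?thesis
    using aw_coeff_Suc[OF qpoch_q_nonzero qpoch_A_up[of "Suc j"] qpoch_B_down[of "Suc j"]] assms by simp
qed

lemma mixed_coeff:
  "aw_norm q s n (q * A) (B / q) * image_coeff q s True False A B (q ^ n) (q * A) (B / q) j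
    = - ((B - q * q ^ n)^2 / (s^3 * q ^ n * ((1 - A) * (1 - B)))) * aw_norm q s n A B * aw_coeff q (q ^ n) A B j"
proof (cases "j \<le> n")
  case True
  define ratio_norm where "ratio_norm =
    (1 - q / (q * A)) * (1 - q / B * q ^ n) / ((1 - q / (q * A) * q ^ n) * (1 - q / B))"
  define ratio_coeff where "ratio_coeff =
    (1 - q / (q * A) * q ^ j) * (1 - q / B) / ((1 - q / (q * A)) * (1 - q / B * q ^ j))"
  define step where "step = q * (1 - 1 / q ^ n * q ^ j) * (1 - q * q ^ n / (A * B) * q ^ j)
    / ((1 - q * q ^ j) * (1 - q * q ^ j) * (1 - q / (q * A) * q ^ j) * (1 - q / (B / q) * q ^ j))"
  have "A - q ^ n \<noteq> 0" "B - q \<noteq> 0" "A - q ^ j \<noteq> 0" "B - q * q ^ j \<noteq> 0" "B - q * q * q ^ j \<noteq> 0"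
    using mixed_nonzero[of n] mixed_nonzero[of 0] mixed_nonzero[OF True] A_nonzero B_nonzero q_nonzero
    by (auto simp: field_simps)
  moreover have "1 - q * q ^ j \<noteq> 0"
    using q_power_ne_1[of "Suc j"] by simp
  ultimately have factor: "ratio_norm * ratio_coeff
      * (level_coeff s True False A B (q ^ j) + step * lower_coeff s True False A B (q * q ^ j))
      = - ((B - q * q ^ n)^2 / (s^3 * q ^ n * ((1 - A) * (1 - B))))"
    unfolding ratio_norm_def ratio_coeff_def step_def
    using mixed_factor_identity[OF s_squared s_nonzero A_nonzero B_nonzero _ _ nonzero_factors(4,5)]
      q_nonzero by simp
  have norm: "aw_norm q s n (q * A) (B / q) = aw_norm q s n A B * ratio_norm"
    unfolding ratio_norm_def by (rule mixed_norm)
  have step: "aw_coeff q (q ^ n) (q * A) (B / q) (Suc j) = aw_coeff q (q ^ n) (q * A) (B / q) j * step"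
    unfolding step_def by (rule mixed_coeff_step[OF True])
  have coeff: "aw_coeff q (q ^ n) (q * A) (B / q) j = aw_coeff q (q ^ n) A B j * ratio_coeff"
    unfolding ratio_coeff_def by (rule mixed_coeff_ratio[OF True])
  have "aw_norm q s n (q * A) (B / q) * image_coeff q s True False A B (q ^ n) (q * A) (B / q) j
      = aw_norm q s n A B * aw_coeff q (q ^ n) A B j * (ratio_norm * ratio_coeff
        * (level_coeff s True False A B (q ^ j) + step * lower_coeff s True False A B (q * q ^ j)))"
    unfolding image_coeff_def norm step coeff power_Suc[of q j]
    by (simp add: raise_coeff_def raise_num_def algebra_simps)
  then show ?thesis
    unfolding factor by (simp add: ac_simps)
next
  case False
  then have "aw_coeff q (q ^ n) (q * A) (B / q) (Suc j) = 0" "aw_coeff q (q ^ n) (q * A) (B / q) j = 0"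
    "aw_coeff q (q ^ n) A B j = 0"
    using q_nonzero by (intro aw_coeff_eq_0; simp)+
  then show ?thesis
    by (simp add: image_coeff_def raise_coeff_def raise_num_def)
qed

lemma shift_op_mixed:
  "shift_op q s True False A B (\<lambda>z. aw_poly q s n z (q * A) (B / q)) x
    = - ((B - q * q ^ n)^2 / (s^3 * q ^ n * ((1 - A) * (1 - B)))) * aw_poly q s n x A B"
  by (rule shift_op_aw_poly_eqI[OF mixed_coeff]) simp

end

lemma (in aw_point) aw_point_swap: "aw_point q s x B A"
  by unfold_locales (use s_squared s_nonzero x_nonzero x_squared_ne_1 s_x_ne_1 x_ne_s A_nonzero A_ne_1
      B_nonzero B_ne_1 q_power_ne_1 in auto)

lemma shift_op_mixed_swap:
  assumes "aw_mixed q s x B A n"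
  shows "shift_op q s False True A B (\<lambda>z. aw_poly q s n z (A / q) (q * B)) x
    = - ((A - q * q ^ n)^2 / (s^3 * q ^ n * ((1 - A) * (1 - B)))) * aw_poly q s n x A B"
proof -
  interpret aw_mixed q s x B A n
    by (fact assms)
  have "shift_op q s False True A B (\<lambda>z. aw_poly q s n z (A / q) (q * B)) x
      = shift_op q s True False B A (\<lambda>z. aw_poly q s n z (q * B) (A / q)) x"
    by (simp add: shift_op_swap aw_poly_swap[of q s n _ "A / q"])
  also have "\<dots> = - ((A - q * q ^ n)^2 / (s^3 * q ^ n * ((1 - B) * (1 - A)))) * aw_poly q s n x B A"
    by (rule shift_op_mixed)
  finally show ?thesis
    by (simp add: aw_poly_swap[of q s n x B A] mult.commute)
qed

lemma raising_factor_identity: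
  fixes s q A B N P :: complex
  assumes "s^2 = q" "s \<noteq> 0" "N \<noteq> 0" "P \<noteq> 0" "1 - A \<noteq> 0" "1 - B \<noteq> 0"
    "1 - q * P \<noteq> 0" "1 - q * (q * P) \<noteq> 0" "A - q * q * P \<noteq> 0" "B - q * q * P \<noteq> 0"
    "A - q * q * (q * P) \<noteq> 0" "B - q * q * (q * P) \<noteq> 0"
  shows "raise_coeff s False False A B P
     + (q * (N - P) * (A * B - q * q * q * N * P)
        / (N * ((1 - q * P) * (1 - q * P)) * (A - q * q * P) * (B - q * q * P)))
       * level_coeff s False False A B (q * P)
     + (q * (N - P) * (A * B - q * q * q * N * P)
        / (N * ((1 - q * P) * (1 - q * P)) * (A - q * q * P) * (B - q * q * P)))
       * (q * (N - q * P) * (A * B - q * q * q * N * (q * P))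
          / (N * ((1 - q * (q * P)) * (1 - q * (q * P))) * (A - q * q * (q * P)) * (B - q * q * (q * P))))
       * lower_coeff s False False A B (q * (q * P))
   = (A * B - q * q * N)^2 * (1 - q * N)^2 / (s^6 * ((1 - A) * (1 - B)) * (N^2 * ((1 - q * P) * (1 - q * P))))"
proof -
  have q: "q \<noteq> 0"
    using assms(1,2) by auto
  have s_powers: "s^4 = q^2" "s^6 = q^3" "s^8 = q^4"
    unfolding assms(1)[symmetric] by (simp_all flip: power_mult)
  \<comment> \<open>\<open>lower_num\<close> cancels the denominator of the second ratio; with \<open>s\<close> eliminated as well, this
    keeps the final polynomial identity small enough for \<open>algebra\<close>\<close>
  have lower: "q * (N - q * P) * (A * B - q * q * q * N * (q * P))
          / (N * ((1 - q * (q * P)) * (1 - q * (q * P))) * (A - q * q * (q * P)) * (B - q * q * (q * P)))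
       * lower_coeff s False False A B (q * (q * P))
     = (N - q * P) * (A * B - q * q * q * N * (q * P)) * (q * q * P - A) * (q * q * P - B)
       / (s^6 * (q * q * P^2 * N) * ((1 - A) * (1 - B)))"
    unfolding lower_coeff_def lower_num_def if_False
    apply (simp only: times_divide_times_eq)
    apply (rule frac_eq_eq[THEN iffD2, rotated 2])
    subgoal unfolding s_powers assms(1) by algebra
    using assms q by simp_all
  have combine: "a1 / (t * p1 * c) + (r / d) * (a2 / (t * p2 * c)) + (r / d) * (a3 / (t * p3 * c))
      = k / (t * p1 * c * e)"
    if "(a1 * d * p2 * p3 + r * a2 * p1 * p3 + r * a3 * p1 * p2) * e = k * d * p2 * p3"
      and "t \<noteq> 0" "p1 \<noteq> 0" "p2 \<noteq> 0" "p3 \<noteq> 0" "c \<noteq> 0" "d \<noteq> 0" "e \<noteq> 0"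
    for a1 t p1 c r d a2 p2 a3 p3 k e :: complex
    using that by (simp add: field_simps) algebra
  have rhs: "(A * B - q * q * N)^2 * (1 - q * N)^2 / (s^6 * ((1 - A) * (1 - B)) * (N^2 * ((1 - q * P) * (1 - q * P))))
    = (A * B - q * q * N)^2 * (1 - q * N)^2 * P^2
      / (s^6 * P^2 * ((1 - A) * (1 - B)) * (N^2 * ((1 - q * P) * (1 - q * P))))"
    using assms(4) by simp
  show ?thesis
    unfolding rhs mult.assoc[of "_ / _" "_ / _" "lower_coeff _ _ _ _ _ _"] lower
    unfolding raise_coeff_def level_coeff_def
    apply (rule combine)
    subgoal unfolding raise_num_def level_num_def if_False simp_thms s_powers assms(1) by algebra
    using assms q by simp_all
qed

lemma raising_factor_identity_bottom:
  fixes s q A B N :: complex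
  assumes "s^2 = q" "s \<noteq> 0" "N \<noteq> 0" "1 - A \<noteq> 0" "1 - B \<noteq> 0"
    "1 - q \<noteq> 0" "A - q * q \<noteq> 0" "B - q * q \<noteq> 0"
  shows "level_coeff s False False A B 1
     + (q * (N - 1) * (A * B - q * q * q * N) / (N * ((1 - q) * (1 - q)) * (A - q * q) * (B - q * q)))
       * lower_coeff s False False A B q
   = - ((A * B - q * q * N) * (1 - q * N) * (A - q) * (B - q)) / (s^6 * ((1 - A) * (1 - B)) * N)"
proof -
  have q: "q \<noteq> 0"
    using assms(1,2) by auto
  have s_powers: "s^4 = q^2" "s^6 = q^3" "s^8 = q^4"
    unfolding assms(1)[symmetric] by (simp_all flip: power_mult)
  have lower: "q * (N - 1) * (A * B - q * q * q * N) / (N * ((1 - q) * (1 - q)) * (A - q * q) * (B - q * q))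
       * lower_coeff s False False A B q
     = (N - 1) * (A * B - q * q * q * N) * (q - A) * (q - B) / (s^6 * N * ((1 - A) * (1 - B)))"
    unfolding lower_coeff_def lower_num_def if_False
    apply (simp only: times_divide_times_eq)
    apply (rule frac_eq_eq[THEN iffD2, rotated 2])
    subgoal unfolding s_powers assms(1) by algebra
    using assms q by simp_all
  have combine: "a / (t * c) + b / (t * N * c) = k / (t * c * N)"
    if "a * N + b = k" "t \<noteq> 0" "c \<noteq> 0" for a b c t k :: complex
    using that assms(3) by (simp add: field_simps)
  show ?thesis
    unfolding lower level_coeff_def power_one mult_1_right
    apply (rule combine)
    subgoal unfolding level_num_def if_False s_powers assms(1) power_one mult_1_left mult_1_right by algebra
    using assms by simp_all
qed

locale aw_raising = aw_point +
  fixes n :: nat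
  assumes qpoch_A_down: "\<And>m. m \<le> Suc n \<Longrightarrow> qpoch q (q / (A / q)) m \<noteq> 0"
    and qpoch_B_down: "\<And>m. m \<le> Suc n \<Longrightarrow> qpoch q (q / (B / q)) m \<noteq> 0"
    and qpoch_A: "\<And>m. m \<le> Suc n \<Longrightarrow> qpoch q (q / A) m \<noteq> 0"
    and qpoch_B: "\<And>m. m \<le> Suc n \<Longrightarrow> qpoch q (q / B) m \<noteq> 0"
    and qpoch_AB: "qpoch q (q ^ (n + 2) / (A * B)) (Suc n) \<noteq> 0"
begin

lemma raising_nonzero:
  "\<And>k. k \<le> n \<Longrightarrow> A - q * q * q ^ k \<noteq> 0" "\<And>k. k \<le> n \<Longrightarrow> B - q * q * q ^ k \<noteq> 0"
  "A - q \<noteq> 0" "B - q \<noteq> 0" "A * B - q * q * q ^ n \<noteq> 0" "\<And>k. 1 - q * q ^ k \<noteq> 0"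
proof -
  show "A - q * q * q ^ k \<noteq> 0" "B - q * q * q ^ k \<noteq> 0" if "k \<le> n" for k
  proof -
    have "q / (A / q) * q ^ k \<noteq> 1" "q / (B / q) * q ^ k \<noteq> 1"
      using qpoch_A_down[of "Suc n"] qpoch_B_down[of "Suc n"] that
      by (meson le_imp_less_Suc order_refl qpoch_eq_0_iff)+
    then show "A - q * q * q ^ k \<noteq> 0" "B - q * q * q ^ k \<noteq> 0"
      using A_nonzero B_nonzero by (auto simp: field_simps)
  qed
  show "A - q \<noteq> 0" "B - q \<noteq> 0"
    using qpoch_A[of 1] qpoch_B[of 1] A_nonzero B_nonzero by (auto simp: qpoch_eq_0_iff)
  show "A * B - q * q * q ^ n \<noteq> 0"
    using qpoch_AB A_nonzero B_nonzero by (auto simp: qpoch_eq_0_iff field_simps)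
  show "1 - q * q ^ k \<noteq> 0" for k
    using q_power_ne_1[of "Suc k"] by simp
qed

lemma raising_coeff_step:
  assumes "k \<le> n"
  shows "aw_coeff q (q ^ n) (A / q) (B / q) (Suc k) = aw_coeff q (q ^ n) (A / q) (B / q) k
    * (q * (q ^ n - q ^ k) * (A * B - q * q * q * q ^ n * q ^ k)
       / (q ^ n * ((1 - q * q ^ k) * (1 - q * q ^ k)) * (A - q * q * q ^ k) * (B - q * q * q ^ k)))"
proof -
  note nz = raising_nonzero(1,2)[OF assms] raising_nonzero(6)[of k] q_nonzero A_nonzero B_nonzero
  have "q ^ n \<noteq> 0"
    using q_nonzero by simp
  then have factors: "1 - 1 / q ^ n * q ^ k = (q ^ n - q ^ k) / q ^ n"
    "1 - q * q ^ n / ((A / q) * (B / q)) * q ^ k = (A * B - q * q * q * q ^ n * q ^ k) / (A * B)"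
    "1 - q / (A / q) * q ^ k = (A - q * q * q ^ k) / A" "1 - q / (B / q) * q ^ k = (B - q * q * q ^ k) / B"
    using nz by (simp_all add: field_simps)
  have "aw_coeff q (q ^ n) (A / q) (B / q) (Suc k) = aw_coeff q (q ^ n) (A / q) (B / q) k
    * (q * (1 - 1 / q ^ n * q ^ k) * (1 - q * q ^ n / ((A / q) * (B / q)) * q ^ k)
       / ((1 - q * q ^ k) * (1 - q * q ^ k) * (1 - q / (A / q) * q ^ k) * (1 - q / (B / q) * q ^ k)))"
    using assms by (intro aw_coeff_Suc qpoch_q_nonzero qpoch_A_down qpoch_B_down) simp_all
  also have "q * (1 - 1 / q ^ n * q ^ k) * (1 - q * q ^ n / ((A / q) * (B / q)) * q ^ k)
       / ((1 - q * q ^ k) * (1 - q * q ^ k) * (1 - q / (A / q) * q ^ k) * (1 - q / (B / q) * q ^ k))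
    = q * (q ^ n - q ^ k) * (A * B - q * q * q * q ^ n * q ^ k)
       / (q ^ n * ((1 - q * q ^ k) * (1 - q * q ^ k)) * (A - q * q * q ^ k) * (B - q * q * q ^ k))"
    unfolding factors
    apply (simp only: times_divide_times_eq divide_divide_eq_left divide_divide_eq_right
        times_divide_eq_left times_divide_eq_right)
    apply (rule frac_eq_eq[THEN iffD2, rotated 2])
    subgoal by algebra
    using nz \<open>q ^ n \<noteq> 0\<close> by simp_all
  finally show ?thesis .
qed

lemma raising_coeff_shift:
  assumes "i \<le> n"
  shows "aw_coeff q (q ^ Suc n) A B (Suc i) = aw_coeff q (q ^ n) (A / q) (B / q) i
    * ((q * q ^ n - 1) * (A * B - q * q * q ^ n)
       / (q ^ n * ((1 - q * q ^ i) * (1 - q * q ^ i)) * (A - q) * (B - q)))"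
proof -
  note nz = raising_nonzero(3-5) raising_nonzero(6)[of i] q_nonzero A_nonzero B_nonzero
  have "q ^ n \<noteq> 0"
    using q_nonzero by simp
  then have factors: "1 - 1 / (q * q ^ n) = (q * q ^ n - 1) / (q * q ^ n)"
    "1 - q * (q * q ^ n) / (A * B) = (A * B - q * q * q ^ n) / (A * B)"
    "1 - q / A = (A - q) / A" "1 - q / B = (B - q) / B"
    using nz by (simp_all add: field_simps)
  have "aw_coeff q (q ^ Suc n) A B (Suc i) = aw_coeff q (q ^ n) (A / q) (B / q) i
    * (q * (1 - 1 / q ^ Suc n) * (1 - q * q ^ Suc n / (A * B))
       / ((1 - q * q ^ i) * (1 - q * q ^ i) * (1 - q / A) * (1 - q / B)))"
    by (rule aw_coeff_Suc_shift)
      (use qpoch_q_nonzero qpoch_A[of "Suc i"] qpoch_B[of "Suc i"] assms q_nonzero in \<open>simp_all add: field_simps\<close>)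
  also have "q * (1 - 1 / q ^ Suc n) * (1 - q * q ^ Suc n / (A * B))
       / ((1 - q * q ^ i) * (1 - q * q ^ i) * (1 - q / A) * (1 - q / B))
    = (q * q ^ n - 1) * (A * B - q * q * q ^ n)
      / (q ^ n * ((1 - q * q ^ i) * (1 - q * q ^ i)) * (A - q) * (B - q))"
    unfolding power_Suc factors
    apply (simp only: times_divide_times_eq divide_divide_eq_left divide_divide_eq_right
        times_divide_eq_left times_divide_eq_right)
    apply (rule frac_eq_eq[THEN iffD2, rotated 2])
    subgoal by algebra
    using nz \<open>q ^ n \<noteq> 0\<close> by simp_all
  finally show ?thesis .
qed

lemma raising_norm:
  "aw_norm q s (Suc n) A B
    = aw_norm q s n (A / q) (B / q) * (- ((1 - q * q ^ n) * (A - q) * (B - q)) / (s * (A * B - q * q * q ^ n)))"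
proof -
  note nz = raising_nonzero(3-5) q_nonzero A_nonzero B_nonzero s_nonzero
  have factors: "1 - q ^ (n + 2) / (A * B) = (A * B - q * q * q ^ n) / (A * B)"
    "1 - q / A = (A - q) / A" "1 - q / B = (B - q) / B"
    using nz by (simp_all add: field_simps)
  have "aw_norm q s (Suc n) A B = aw_norm q s n (A / q) (B / q)
    * (- (1 - q ^ Suc n) * (1 - q / A) * (1 - q / B) / (s * (1 - q ^ (n + 2) / (A * B))))"
    by (rule aw_norm_Suc_shift)
      (use q_nonzero A_nonzero B_nonzero qpoch_AB s_nonzero in \<open>simp_all add: field_simps\<close>)
  also have "- (1 - q ^ Suc n) * (1 - q / A) * (1 - q / B) / (s * (1 - q ^ (n + 2) / (A * B)))
    = - ((1 - q * q ^ n) * (A - q) * (B - q)) / (s * (A * B - q * q * q ^ n))"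
    unfolding power_Suc factors
    apply (simp only: times_divide_times_eq divide_divide_eq_left divide_divide_eq_right
        times_divide_eq_left times_divide_eq_right minus_divide_left mult_minus_left)
    apply (rule frac_eq_eq[THEN iffD2, rotated 2])
    subgoal by algebra
    using nz by simp_all
  finally show ?thesis .
qed

lemma raising_target:
  assumes "i \<le> n"
  shows "(A * B - q * q * q ^ n)^2 / (s^5 * q ^ n * ((1 - A) * (1 - B))) * aw_norm q s (Suc n) A B
      * aw_coeff q (q ^ Suc n) A B (Suc i)
    = aw_norm q s n (A / q) (B / q) * aw_coeff q (q ^ n) (A / q) (B / q) i
      * ((A * B - q * q * q ^ n)^2 * (1 - q * q ^ n)^2
         / (s^6 * ((1 - A) * (1 - B)) * ((q ^ n)^2 * ((1 - q * q ^ i) * (1 - q * q ^ i)))))"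
proof -
  note nz = raising_nonzero(3-5) raising_nonzero(6)[of i] q_nonzero s_nonzero nonzero_factors(4,5)
  have "q ^ n \<noteq> 0"
    using q_nonzero by simp
  have "(A * B - q * q * q ^ n)^2 / (s^5 * q ^ n * ((1 - A) * (1 - B)))
      * (- ((1 - q * q ^ n) * (A - q) * (B - q)) / (s * (A * B - q * q * q ^ n)))
      * ((q * q ^ n - 1) * (A * B - q * q * q ^ n)
         / (q ^ n * ((1 - q * q ^ i) * (1 - q * q ^ i)) * (A - q) * (B - q)))
    = (A * B - q * q * q ^ n)^2 * (1 - q * q ^ n)^2
       / (s^6 * ((1 - A) * (1 - B)) * ((q ^ n)^2 * ((1 - q * q ^ i) * (1 - q * q ^ i))))"
    apply (simp only: times_divide_times_eq)
    apply (rule frac_eq_eq[THEN iffD2, rotated 2])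
    subgoal by algebra
    using nz \<open>q ^ n \<noteq> 0\<close> by simp_all
  then show ?thesis
    unfolding raising_norm raising_coeff_shift[OF assms] by (simp only: ac_simps)
qed

lemma raising_target_0:
  "(A * B - q * q * q ^ n)^2 / (s^5 * q ^ n * ((1 - A) * (1 - B))) * aw_norm q s (Suc n) A B
      * aw_coeff q (q ^ Suc n) A B 0
    = aw_norm q s n (A / q) (B / q)
      * (- ((A * B - q * q * q ^ n) * (1 - q * q ^ n) * (A - q) * (B - q)) / (s^6 * ((1 - A) * (1 - B)) * q ^ n))"
proof -
  note nz = raising_nonzero(3-5) q_nonzero s_nonzero nonzero_factors(4,5)
  have "q ^ n \<noteq> 0"
    using q_nonzero by simp
  have "(A * B - q * q * q ^ n)^2 / (s^5 * q ^ n * ((1 - A) * (1 - B)))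
      * (- ((1 - q * q ^ n) * (A - q) * (B - q)) / (s * (A * B - q * q * q ^ n)))
    = - ((A * B - q * q * q ^ n) * (1 - q * q ^ n) * (A - q) * (B - q)) / (s^6 * ((1 - A) * (1 - B)) * q ^ n)"
    apply (simp only: times_divide_times_eq)
    apply (rule frac_eq_eq[THEN iffD2, rotated 2])
    subgoal by algebra
    using nz \<open>q ^ n \<noteq> 0\<close> by simp_all
  then show ?thesis
    unfolding raising_norm aw_coeff_0 by (simp only: ac_simps mult_1_left mult_1_right)
qed

lemma raising_coeff_0:
  "aw_norm q s n (A / q) (B / q) * image_coeff q s False False A B (q ^ n) (A / q) (B / q) 0
    = (A * B - q * q * q ^ n)^2 / (s^5 * q ^ n * ((1 - A) * (1 - B)))
      * aw_norm q s (Suc n) A B * aw_coeff q (q ^ Suc n) A B 0"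
proof -
  have step: "aw_coeff q (q ^ n) (A / q) (B / q) (Suc 0)
    = q * (q ^ n - 1) * (A * B - q * q * q * q ^ n) / (q ^ n * ((1 - q) * (1 - q)) * (A - q * q) * (B - q * q))"
    using raising_coeff_step[of 0] by simp
  have "1 - q \<noteq> 0" "A - q * q \<noteq> 0" "B - q * q \<noteq> 0"
    using raising_nonzero(6)[of 0] raising_nonzero(1,2)[of 0] by simp_all
  then have "level_coeff s False False A B 1
      + aw_coeff q (q ^ n) (A / q) (B / q) (Suc 0) * lower_coeff s False False A B q
    = - ((A * B - q * q * q ^ n) * (1 - q * q ^ n) * (A - q) * (B - q)) / (s^6 * ((1 - A) * (1 - B)) * q ^ n)"
    unfolding step
    using raising_factor_identity_bottom[OF s_squared s_nonzero _ nonzero_factors(4,5)] q_nonzero by simp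
  then show ?thesis
    unfolding raising_target_0 by (simp add: image_coeff_def raise_coeff_def)
qed

lemma raising_coeff_interior:
  assumes "i < n"
  shows "aw_norm q s n (A / q) (B / q) * image_coeff q s False False A B (q ^ n) (A / q) (B / q) (Suc i)
    = (A * B - q * q * q ^ n)^2 / (s^5 * q ^ n * ((1 - A) * (1 - B)))
      * aw_norm q s (Suc n) A B * aw_coeff q (q ^ Suc n) A B (Suc i)"
proof -
  let ?c = "aw_coeff q (q ^ n) (A / q) (B / q)"
  let ?ratio = "\<lambda>P. q * (q ^ n - P) * (A * B - q * q * q * q ^ n * P)
    / (q ^ n * ((1 - q * P) * (1 - q * P)) * (A - q * q * P) * (B - q * q * P))"
  have step: "?c (Suc i) = ?c i * ?ratio (q ^ i)" "?c (Suc (Suc i)) = ?c (Suc i) * ?ratio (q * q ^ i)"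
    using raising_coeff_step[of i] raising_coeff_step[of "Suc i"] assms by simp_all
  have "1 - q * q ^ i \<noteq> 0" "1 - q * (q * q ^ i) \<noteq> 0"
    "A - q * q * q ^ i \<noteq> 0" "B - q * q * q ^ i \<noteq> 0" "A - q * q * (q * q ^ i) \<noteq> 0" "B - q * q * (q * q ^ i) \<noteq> 0"
    using raising_nonzero(6)[of i] raising_nonzero(6)[of "Suc i"] raising_nonzero(1,2)[of i]
      raising_nonzero(1,2)[of "Suc i"] assms by simp_all
  then have identity: "raise_coeff s False False A B (q ^ i)
      + ?ratio (q ^ i) * level_coeff s False False A B (q * q ^ i)
      + ?ratio (q ^ i) * ?ratio (q * q ^ i) * lower_coeff s False False A B (q * (q * q ^ i))
    = (A * B - q * q * q ^ n)^2 * (1 - q * q ^ n)^2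
       / (s^6 * ((1 - A) * (1 - B)) * ((q ^ n)^2 * ((1 - q * q ^ i) * (1 - q * q ^ i))))"
    using raising_factor_identity[OF s_squared s_nonzero] q_nonzero nonzero_factors(4,5) by simp
  have "image_coeff q s False False A B (q ^ n) (A / q) (B / q) (Suc i)
    = ?c i * (raise_coeff s False False A B (q ^ i)
      + ?ratio (q ^ i) * level_coeff s False False A B (q * q ^ i)
      + ?ratio (q ^ i) * ?ratio (q * q ^ i) * lower_coeff s False False A B (q * (q * q ^ i)))"
    unfolding image_coeff_def step(2) step(1) by (simp add: distrib_left mult.assoc)
  then show ?thesis
    unfolding raising_target[OF less_imp_le[OF assms]] identity by (simp only: mult.assoc)
qed

lemma raising_coeff_top:
  "aw_norm q s n (A / q) (B / q) * image_coeff q s False False A B (q ^ n) (A / q) (B / q) (Suc n)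
    = (A * B - q * q * q ^ n)^2 / (s^5 * q ^ n * ((1 - A) * (1 - B)))
      * aw_norm q s (Suc n) A B * aw_coeff q (q ^ Suc n) A B (Suc n)"
proof -
  have "aw_coeff q (q ^ n) (A / q) (B / q) (Suc n) = 0" "aw_coeff q (q ^ n) (A / q) (B / q) (Suc (Suc n)) = 0"
    using q_nonzero by (simp_all add: aw_coeff_eq_0)
  then have "image_coeff q s False False A B (q ^ n) (A / q) (B / q) (Suc n)
      = aw_coeff q (q ^ n) (A / q) (B / q) n * raise_coeff s False False A B (q ^ n)"
    by (simp add: image_coeff_def)
  moreover have "raise_coeff s False False A B (q ^ n)
    = (A * B - q * q * q ^ n)^2 * (1 - q * q ^ n)^2
       / (s^6 * ((1 - A) * (1 - B)) * ((q ^ n)^2 * ((1 - q * q ^ n) * (1 - q * q ^ n))))"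
  proof -
    have s4: "s^4 = q^2"
      unfolding s_squared[symmetric] by (simp flip: power_mult)
    show ?thesis
      unfolding raise_coeff_def raise_num_def if_False simp_thms s4
      apply (rule frac_eq_eq[THEN iffD2, rotated 2])
      subgoal by algebra
      using raising_nonzero(6)[of n] s_nonzero q_nonzero nonzero_factors(4,5) by simp_all
  qed
  ultimately show ?thesis
    unfolding raising_target[OF order_refl] by (simp only: mult.assoc)
qed

lemma raising_coeff:
  "aw_norm q s n (A / q) (B / q) * image_coeff q s False False A B (q ^ n) (A / q) (B / q) j
    = (A * B - q * q * q ^ n)^2 / (s^5 * q ^ n * ((1 - A) * (1 - B)))
      * aw_norm q s (Suc n) A B * aw_coeff q (q ^ Suc n) A B j"
proof -
  consider "j = 0" | i where "j = Suc i" "i < n" | "j = Suc n" | "Suc n < j"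
    by (metis less_Suc_eq not0_implies_Suc not_less_eq)
  then show ?thesis
  proof cases
    case 1
    then show ?thesis
      by (simp only: raising_coeff_0)
  next
    case 2
    then show ?thesis
      by (simp only: raising_coeff_interior)
  next
    case 3
    then show ?thesis
      by (simp only: raising_coeff_top)
  next
    case 4
    then have "aw_coeff q (q ^ n) (A / q) (B / q) (j - 1) = 0" "aw_coeff q (q ^ n) (A / q) (B / q) j = 0"
      "aw_coeff q (q ^ n) (A / q) (B / q) (Suc j) = 0" "aw_coeff q (q ^ Suc n) A B j = 0"
      using q_nonzero by (intro aw_coeff_eq_0; simp)+
    then show ?thesis
      by (simp add: image_coeff_def)
  qed
qed

lemma shift_op_raising:
  "shift_op q s False False A B (\<lambda>z. aw_poly q s n z (A / q) (B / q)) x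
    = (A * B - q * q * q ^ n)^2 / (s^5 * q ^ n * ((1 - A) * (1 - B))) * aw_poly q s (Suc n) x A B"
  by (rule shift_op_aw_poly_eqI[OF raising_coeff]) simp

end

section \<open>Summing the four contiguous relations\<close>

lemma A6_Pbar_eq:
  assumes "r^4 = q"
  shows "A6 r (Pbar nu q r n) x x0 x1 =
      nu n (r^2 * x0) (r^2 * x1)
        * shift_op q (r^2) True True (x0^2) (x1^2) (\<lambda>z. aw_poly q (r^2) n z (q * x0^2) (q * x1^2)) x
    + nu n (r^2 * x0) (x1 / r^2)
        * shift_op q (r^2) True False (x0^2) (x1^2) (\<lambda>z. aw_poly q (r^2) n z (q * x0^2) (x1^2 / q)) x
    + nu n (x0 / r^2) (r^2 * x1)
        * shift_op q (r^2) False True (x0^2) (x1^2) (\<lambda>z. aw_poly q (r^2) n z (x0^2 / q) (q * x1^2)) x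
    + nu n (x0 / r^2) (x1 / r^2)
        * shift_op q (r^2) False False (x0^2) (x1^2) (\<lambda>z. aw_poly q (r^2) n z (x0^2 / q) (x1^2 / q)) x"
proof -
  have "(r^2 * y)^2 = q * y^2" "(y / r^2)^2 = y^2 / q" for y
    using assms by (simp_all add: power_mult_distrib power_divide flip: power_mult)
  then show ?thesis
    unfolding A6_eq_shift_ops[OF assms] Pbar_def Pn_eq_aw_poly by (simp add: shift_op_cmult)
qed

lemma generic_point_aw_point:
  assumes "generic_point q r n x x0 x1" "r^4 = q" "0 < norm q" "norm q < 1"
  shows "aw_point q (r^2) x (x0^2) (x1^2)"
proof unfold_locales
  show "(r^2)^2 = q"
    using assms(2) by (simp flip: power_mult)
  then show "r^2 \<noteq> 0"
    using assms(3) by auto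
  have "1 - r^2 / x \<noteq> 0" "x \<noteq> 0"
    using assms(1) unfolding generic_point_def by blast+
  then show "x \<noteq> r^2"
    by auto
  show "q ^ k \<noteq> 1" if "0 < k" for k
  proof
    assume "q ^ k = 1"
    then have "norm q ^ k = 1"
      by (metis norm_one norm_power)
    moreover have "norm q ^ k < 1"
      using assms(3,4) that by (simp add: power_less_one_iff)
    ultimately show False
      by simp
  qed
qed (use assms(1) in \<open>auto simp: generic_point_def\<close>)

lemma generic_point_qpoch_nonzero:
  assumes "generic_point q r n x x0 x1" "r^4 = q" "m \<le> Suc n"
  shows "qpoch q (q / (q * x0^2)) m \<noteq> 0" "qpoch q (q / x0^2) m \<noteq> 0" "qpoch q (q / (x0^2 / q)) m \<noteq> 0"
    and "qpoch q (q / (q * x1^2)) m \<noteq> 0" "qpoch q (q / x1^2) m \<noteq> 0" "qpoch q (q / (x1^2 / q)) m \<noteq> 0"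
    and "qpoch q (q ^ (m + 1) / (x0^2 * x1^2)) m \<noteq> 0" "qpoch q (q ^ (m + 1) / ((q * x0^2) * (q * x1^2))) m \<noteq> 0"
proof -
  have squares: "(r^2 * y)^2 = q * y^2" "((1 / r^2) * y)^2 = y^2 / q" "(1 * y)^2 = y^2" for y
    using assms(2) by (simp_all add: power_mult_distrib power_divide flip: power_mult)
  have "qpoch q (q ^ (m + 1) / ((a * x0)^2 * (b * x1)^2)) m \<noteq> 0 \<and> qpoch q (q / (a * x0)^2) m \<noteq> 0
      \<and> qpoch q (q / (b * x1)^2) m \<noteq> 0"
    if "a \<in> {1 / r^2, 1, r^2}" "b \<in> {1 / r^2, 1, r^2}" for a b
    using assms(1,3) that unfolding generic_point_def by auto
  from this[of "r^2" "r^2"] this[of 1 1] this[of "1 / r^2" "1 / r^2"] show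
    "qpoch q (q / (q * x0^2)) m \<noteq> 0" "qpoch q (q / x0^2) m \<noteq> 0" "qpoch q (q / (x0^2 / q)) m \<noteq> 0"
    "qpoch q (q / (q * x1^2)) m \<noteq> 0" "qpoch q (q / x1^2) m \<noteq> 0" "qpoch q (q / (x1^2 / q)) m \<noteq> 0"
    "qpoch q (q ^ (m + 1) / (x0^2 * x1^2)) m \<noteq> 0" "qpoch q (q ^ (m + 1) / ((q * x0^2) * (q * x1^2))) m \<noteq> 0"
    unfolding squares by simp_all
qed

lemma regroup_contributions:
  fixes c0 c1 c1' c2 m0 m1 m2 P0 P1 P2 s N A B d q :: complex
  assumes "m0 \<noteq> 0" "m1 \<noteq> 0" "m2 \<noteq> 0" "d \<noteq> 0" "s \<noteq> 0" "N \<noteq> 0"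
  shows "c0 * ((1 - N)^2 / (s * N * d) * P0) + c1 * (- ((B - q * N)^2 / (s^3 * N * d)) * P1)
       + c1' * (- ((A - q * N)^2 / (s^3 * N * d)) * P1) + c2 * ((A * B - q * q * N)^2 / (s^5 * N * d) * P2)
     = 1 / d * (c2 / m2 * (1 / (s^5 * N)) * (A * B - q * q * N)^2 * (m2 * P2)
        - (1 / (s^3 * N)) * (c1 / m1 * (B - q * N)^2 + c1' / m1 * (A - q * N)^2) * (m1 * P1)
        + c0 / m0 * (1 / (s * N)) * (1 - N)^2 * (m0 * P0))"
  using assms by (simp add: field_simps)

lemma A6_Pbar_contributions:
  assumes "generic_point q r n x x0 x1" "r^4 = q" "0 < norm q" "norm q < 1" "n \<ge> 1"
  shows "A6 r (Pbar nu q r n) x x0 x1 =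
      nu n (r^2 * x0) (r^2 * x1) * ((1 - q ^ n)^2 / (r^2 * q ^ n * ((1 - x0^2) * (1 - x1^2)))
        * aw_poly q (r^2) (n - 1) x (x0^2) (x1^2))
    + nu n (r^2 * x0) (x1 / r^2) * (- ((x1^2 - q * q ^ n)^2 / ((r^2)^3 * q ^ n * ((1 - x0^2) * (1 - x1^2))))
        * aw_poly q (r^2) n x (x0^2) (x1^2))
    + nu n (x0 / r^2) (r^2 * x1) * (- ((x0^2 - q * q ^ n)^2 / ((r^2)^3 * q ^ n * ((1 - x0^2) * (1 - x1^2))))
        * aw_poly q (r^2) n x (x0^2) (x1^2))
    + nu n (x0 / r^2) (x1 / r^2) * ((x0^2 * x1^2 - q * q * q ^ n)^2 / ((r^2)^5 * q ^ n * ((1 - x0^2) * (1 - x1^2)))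
        * aw_poly q (r^2) (Suc n) x (x0^2) (x1^2))"
proof -
  interpret aw_point q "r^2" x "x0^2" "x1^2"
    using generic_point_aw_point assms(1-4) by blast
  note qpoch_nonzero = generic_point_qpoch_nonzero[OF assms(1,2)]
  obtain k where n: "n = Suc k"
    using assms(5) by (cases n) auto
  interpret lowering: aw_lowering q "r^2" x "x0^2" "x1^2" k
  proof
    show "qpoch q (q / (q * x0^2)) m \<noteq> 0" "qpoch q (q / (q * x1^2)) m \<noteq> 0" if "m \<le> Suc k" for m
      using that by (intro qpoch_nonzero; simp add: n)+
    show "qpoch q (q ^ (Suc k + 1) / (q * x0^2 * (q * x1^2))) (Suc k) \<noteq> 0"
      by (rule qpoch_nonzero(8)[of n, unfolded n]) simp
  qed
  interpret mixed: aw_mixed q "r^2" x "x0^2" "x1^2" n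
    by unfold_locales (erule qpoch_nonzero)+
  have mixed_swapped: "aw_mixed q (r^2) x (x1^2) (x0^2) n"
    by (intro aw_mixed.intro aw_point_swap aw_mixed_axioms.intro) (erule qpoch_nonzero)+
  interpret raising: aw_raising q "r^2" x "x0^2" "x1^2" n
  proof
    have "Suc n + 1 = n + 2"
      by simp
    then show "qpoch q (q ^ (n + 2) / (x0^2 * x1^2)) (Suc n) \<noteq> 0"
      using qpoch_nonzero(7)[OF order_refl] by simp
  qed (fact qpoch_nonzero)+
  have k: "k = n - 1"
    using n by simp
  show ?thesis
    unfolding A6_Pbar_eq[OF assms(2)] lowering.shift_op_lowering[folded n, unfolded k] mixed.shift_op_mixed
      shift_op_mixed_swap[OF mixed_swapped] raising.shift_op_raising ..
qed

theorem mainTheorem5: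
  fixes q r :: complex and nu :: "nat \<Rightarrow> complex \<Rightarrow> complex \<Rightarrow> complex"
    and n :: nat and x x0 x1 :: complex
  assumes "0 < norm q" and "norm q < 1" and "r ^ 4 = q"
    and "\<And>m a b. nu m a b \<noteq> 0"
    and "n \<ge> 1"
    and "generic_point q r n x x0 x1"
  shows "A6 r (Pbar nu q r n) x x0 x1 =
    1 / ((1 - x0^2) * (1 - x1^2)) *
    ( nu n (x0 / r^2) (x1 / r^2) / nu (n+1) x0 x1 * (1 / (r^2) ^ (2*n+5))
        * (x0^2 * x1^2 - q^(n+2))^2 * Pbar nu q r (n+1) x x0 x1
    - (1 / (r^2) ^ (2*n+3))
        * (nu n (r^2 * x0) (x1 / r^2) / nu n x0 x1 * (x1^2 - q^(n+1))^2
           + nu n (x0 / r^2) (r^2 * x1) / nu n x0 x1 * (x0^2 - q^(n+1))^2)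
        * Pbar nu q r n x x0 x1
    + nu n (r^2 * x0) (r^2 * x1) / nu (n-1) x0 x1 * (1 / (r^2) ^ (2*n+1))
        * (1 - q^n)^2 * Pbar nu q r (n-1) x x0 x1 )"
proof -
  interpret aw_point q "r^2" x "x0^2" "x1^2"
    using generic_point_aw_point assms(1-3,6) by blast
  have powers: "(r^2) ^ (2 * n + 5) = (r^2)^5 * q ^ n" "(r^2) ^ (2 * n + 3) = (r^2)^3 * q ^ n"
    "(r^2) ^ (2 * n + 1) = r^2 * q ^ n" "q ^ (n + 2) = q * q * q ^ n" "q ^ (n + 1) = q * q ^ n"
    using s_squared by (simp_all add: power_add power_mult)
  show ?thesis
    unfolding A6_Pbar_contributions[OF assms(6,3,1,2,5)] Pbar_def Pn_eq_aw_poly powers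
    unfolding Suc_eq_plus1[symmetric]
    by (rule regroup_contributions) (use assms(4) s_nonzero q_nonzero nonzero_factors(4,5) in simp_all)
qed

end
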